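(* Let $(q_n),(r_n)$ be complex sequences vanishing faster than any negative power of $|n|$ as $n\to\pm\infty$ with $1-q_nr_n\neq0$ and $1+q_nr_{n+1}\ne0$ for all $n$. Let $D_n,E_n,D_\infty,E_\infty$ and the sequences $u_n,v_n,p_n,s_n$ be as in the context. Let $\psi_n^{(q,r)},\phi_n^{(q,r)},\bar\psi_n^{(q,r)},\bar\phi_n^{(q,r)}$ be the Jost solutions of system (Q), and similarly with superscripts $(u,v)$ for system (U) with potentials $(u,v)$ and $(p,s)$ for system (U) with potentials $(p,s)$. Put $$\Gamma_n=\begin{bmatrix}(1-z^{-2})\frac1{E_{n-1}}&0\\ \frac{r_n}{E_{n-1}}&\frac1{D_{n-1}}\end{bmatrix},\qquad \Lambda_n=\begin{bmatrix}\frac1{E_{n-1}}&-\frac{q_n}{D_n}\\ \frac{r_n}{E_{n-1}}&\frac1{D_{n-1}}\end{bmatrix}.$$ Then $$\psi_n^{(q,r)}=D_\infty\Gamma_n\psi_n^{(u,v)}=D_\infty\Lambda_n\psi_n^{(p,s)},\qquad \phi_n^{(q,r)}=\frac{1}{1-z^{-2}}\Gamma_n\phi_n^{(u,v)}=\Lambda_n\phi_n^{(p,s)},$$ $$\bar\psi_n^{(q,r)}=\frac{E_\infty}{1-z^{-2}}\Gamma_n\bar\psi_n^{(u,v)}=E_\infty\Lambda_n\bar\psi_n^{(p,s)},\qquad \bar\phi_n^{(q,r)}=\Gamma_n\bar\phi_n^{(u,v)}=\Lambda_n\bar\phi_n^{(p,s)}.$$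
   Context: System (Q): $\begin{bmatrix}\alpha_n\\ \beta_n\end{bmatrix}=\begin{bmatrix} z & (z-z^{-1})q_n\\ z r_n & z^{-1}+(z-z^{-1})q_nr_n\end{bmatrix}\begin{bmatrix}\alpha_{n+1}\\ \beta_{n+1}\end{bmatrix}$, $n\in\mathbb Z$. System (U) with potentials $(a,b)$: $\begin{bmatrix}\xi_n\\ \eta_n\end{bmatrix}=\begin{bmatrix} z & z a_n\\ z^{-1}b_n & z^{-1}\end{bmatrix}\begin{bmatrix}\xi_{n+1}\\ \eta_{n+1}\end{bmatrix}$. Notation: $D_n=\prod_{j=-\infty}^n(1-q_jr_j)$, $E_n=\prod_{j=-\infty}^n(1+q_jr_{j+1})$, $D_\infty=\prod_{j\in\mathbb Z}(1-q_jr_j)$, $E_\infty=\prod_{j\in\mathbb Z}(1+q_jr_{j+1})$; $u_n=q_nE_{n-1}/D_n$, $v_n=(-r_n+r_{n+1}-q_nr_nr_{n+1})D_{n-1}/E_n$, $p_n=(q_n-q_{n+1}-q_nq_{n+1}r_{n+1})E_{n-1}/D_{n+1}$, $s_n=r_{n+1}D_n/E_n$. For each of the three systems and $|z|=1$, the Jost solutions (overbars are not complex conjugation) are the unique solutions with $\psi_n=\begin{bmatrix}o(1)\\ z^n[1+o(1)]\end{bmatrix}$ as $n\to+\infty$; $\phi_n=\begin{bmatrix}z^{-n}[1+o(1)]\\ o(1)\end{bmatrix}$ as $n\to-\infty$; $\bar\psi_n=\begin{bmatrix}z^{-n}[1+o(1)]\\ o(1)\end{bmatrix}$ as $n\to+\infty$;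 $\bar\phi_n=\begin{bmatrix}o(1)\\ z^{n}[1+o(1)]\end{bmatrix}$ as $n\to-\infty$. *)

theory Defs
  imports Complex_Main
begin

definition rapid_decay :: "(int \<Rightarrow> complex) \<Rightarrow> bool" where
  "rapid_decay q \<longleftrightarrow> (\<forall>k::nat.
     ((\<lambda>n. real_of_int \<bar>n\<bar> ^ k * cmod (q n)) \<longlongrightarrow> 0) at_top \<and>
     ((\<lambda>n. real_of_int \<bar>n\<bar> ^ k * cmod (q n)) \<longlongrightarrow> 0) at_bot)"

definition Dn :: "(int \<Rightarrow> complex) \<Rightarrow> (int \<Rightarrow> complex) \<Rightarrow> int \<Rightarrow> complex" where
  "Dn q r n = Lim at_bot (\<lambda>m. \<Prod>j\<in>{m..n}. (1 - q j * r j))"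

definition En :: "(int \<Rightarrow> complex) \<Rightarrow> (int \<Rightarrow> complex) \<Rightarrow> int \<Rightarrow> complex" where
  "En q r n = Lim at_bot (\<lambda>m. \<Prod>j\<in>{m..n}. (1 + q j * r (j + 1)))"

definition Dinf :: "(int \<Rightarrow> complex) \<Rightarrow> (int \<Rightarrow> complex) \<Rightarrow> complex" where
  "Dinf q r = Lim at_top (\<lambda>n. Dn q r n)"

definition Einf :: "(int \<Rightarrow> complex) \<Rightarrow> (int \<Rightarrow> complex) \<Rightarrow> complex" where
  "Einf q r = Lim at_top (\<lambda>n. En q r n)"

definition useq :: "(int \<Rightarrow> complex) \<Rightarrow> (int \<Rightarrow> complex) \<Rightarrow> int \<Rightarrow> complex" where
  "useq q r n = q n * En q r (n - 1) / Dn q r n"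

definition vseq :: "(int \<Rightarrow> complex) \<Rightarrow> (int \<Rightarrow> complex) \<Rightarrow> int \<Rightarrow> complex" where
  "vseq q r n = (- r n + r (n + 1) - q n * r n * r (n + 1)) * Dn q r (n - 1) / En q r n"

definition pseq :: "(int \<Rightarrow> complex) \<Rightarrow> (int \<Rightarrow> complex) \<Rightarrow> int \<Rightarrow> complex" where
  "pseq q r n = (q n - q (n + 1) - q n * q (n + 1) * r (n + 1)) * En q r (n - 1) / Dn q r (n + 1)"

definition sseq :: "(int \<Rightarrow> complex) \<Rightarrow> (int \<Rightarrow> complex) \<Rightarrow> int \<Rightarrow> complex" where
  "sseq q r n = r (n + 1) * Dn q r n / En q r n"

text \<open>One step of the systems: the value at n is the matrix applied to the value at n+1.\<close>

definition Qstep :: "(int \<Rightarrow> complex) \<Rightarrow> (int \<Rightarrow> complex) \<Rightarrow> complex \<Rightarrow> int \<Rightarrow>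
    complex \<times> complex \<Rightarrow> complex \<times> complex" where
  "Qstep q r z n w =
    (z * fst w + (z - inverse z) * q n * snd w,
     z * r n * fst w + (inverse z + (z - inverse z) * q n * r n) * snd w)"

definition Ustep :: "(int \<Rightarrow> complex) \<Rightarrow> (int \<Rightarrow> complex) \<Rightarrow> complex \<Rightarrow> int \<Rightarrow>
    complex \<times> complex \<Rightarrow> complex \<times> complex" where
  "Ustep a b z n w =
    (z * fst w + z * a n * snd w,
     inverse z * b n * fst w + inverse z * snd w)"

definition solves :: "(int \<Rightarrow> complex \<times> complex \<Rightarrow> complex \<times> complex) \<Rightarrow>
    (int \<Rightarrow> complex \<times> complex) \<Rightarrow> bool" where
  "solves T f \<longleftrightarrow> (\<forall>n. f n = T n (f (n + 1)))"

definition psi_cond :: "complex \<Rightarrow> (int \<Rightarrow> complex \<times> complex) \<Rightarrow> bool" where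
  "psi_cond z f \<longleftrightarrow> ((\<lambda>n. fst (f n)) \<longlongrightarrow> 0) at_top \<and>
     ((\<lambda>n. snd (f n) * z powi (- n)) \<longlongrightarrow> 1) at_top"

definition phi_cond :: "complex \<Rightarrow> (int \<Rightarrow> complex \<times> complex) \<Rightarrow> bool" where
  "phi_cond z f \<longleftrightarrow> ((\<lambda>n. fst (f n) * z powi n) \<longlongrightarrow> 1) at_bot \<and>
     ((\<lambda>n. snd (f n)) \<longlongrightarrow> 0) at_bot"

definition psibar_cond :: "complex \<Rightarrow> (int \<Rightarrow> complex \<times> complex) \<Rightarrow> bool" where
  "psibar_cond z f \<longleftrightarrow> ((\<lambda>n. fst (f n) * z powi n) \<longlongrightarrow> 1) at_top \<and>
     ((\<lambda>n. snd (f n)) \<longlongrightarrow> 0) at_top"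

definition phibar_cond :: "complex \<Rightarrow> (int \<Rightarrow> complex \<times> complex) \<Rightarrow> bool" where
  "phibar_cond z f \<longleftrightarrow> ((\<lambda>n. fst (f n)) \<longlongrightarrow> 0) at_bot \<and>
     ((\<lambda>n. snd (f n) * z powi (- n)) \<longlongrightarrow> 1) at_bot"

definition jost_psi where "jost_psi T z = (THE f. solves T f \<and> psi_cond z f)"
definition jost_phi where "jost_phi T z = (THE f. solves T f \<and> phi_cond z f)"
definition jost_psibar where "jost_psibar T z = (THE f. solves T f \<and> psibar_cond z f)"
definition jost_phibar where "jost_phibar T z = (THE f. solves T f \<and> phibar_cond z f)"

definition Gamma :: "(int \<Rightarrow> complex) \<Rightarrow> (int \<Rightarrow> complex) \<Rightarrow> complex \<Rightarrow> int \<Rightarrow>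
    complex \<times> complex \<Rightarrow> complex \<times> complex" where
  "Gamma q r z n w =
    ((1 - inverse (z ^ 2)) / En q r (n - 1) * fst w,
     r n / En q r (n - 1) * fst w + 1 / Dn q r (n - 1) * snd w)"

definition Lambda :: "(int \<Rightarrow> complex) \<Rightarrow> (int \<Rightarrow> complex) \<Rightarrow> int \<Rightarrow>
    complex \<times> complex \<Rightarrow> complex \<times> complex" where
  "Lambda q r n w =
    (1 / En q r (n - 1) * fst w - q n / Dn q r n * snd w,
     r n / En q r (n - 1) * fst w + 1 / Dn q r (n - 1) * snd w)"

definition csmult :: "complex \<Rightarrow> complex \<times> complex \<Rightarrow> complex \<times> complex" where
  "csmult c w = (c * fst w, c * snd w)"

end

theory Submission
  imports Defs "HOL-Analysis.Infinite_Products" "HOL-Analysis.Summation_Tests"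
begin

(*
  Each of the systems (Q) and (U) is a recursion w_n = T_n w_(n+1) whose 2x2 step matrix differs
  from diag(z, 1/z) by an absolutely summable amount. Conjugating by diag(z^n, z^-n) turns it into
  a summable perturbation of the identity, which has exactly one solution with any prescribed limit
  at +infinity (the limit of the propagators). The step matrices are invertible and their inverses
  are summable perturbations of diag(1/z, z), so running the recursion backwards gives the same at
  -infinity. Hence each Jost solution is the unique solution with its normalisation.

  Gamma_n and Lambda_n intertwine the steps of (U) for the potentials (u,v), resp. (p,s), with the
  step of (Q). Since D_n, E_n tend to 1 at -infinity and to D_infinity, E_infinity at +infinity,
  they carry each Jost solution of (U) to a solution of (Q) that has, up to the constant factors of
  the theorem, the normalisation of the corresponding Jost solution of (Q); uniqueness gives the
  identities.
*)

section \<open>Recursions close to the identity\<close>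

primrec propagator :: "(int \<Rightarrow> 'a \<Rightarrow> 'a) \<Rightarrow> int \<Rightarrow> nat \<Rightarrow> 'a \<Rightarrow> 'a" where
  "propagator T n 0 w = w"
| "propagator T n (Suc k) w = T n (propagator T (n + 1) k w)"

lemma propagator_Suc_right: "propagator T n (Suc k) w = propagator T n k (T (n + int k) w)"
proof (induction k arbitrary: n)
  case (Suc k)
  show ?case using Suc.IH[of "n + 1"] by (simp add: add_ac)
qed simp

lemma bounded_linear_propagator:
  "(\<And>n. bounded_linear (T n)) \<Longrightarrow> bounded_linear (propagator T n k)"
proof (induction k arbitrary: n)
  case 0
  show ?case using bounded_linear_ident by (simp add: id_def)
next
  case (Suc k)
  show ?case using bounded_linear_compose[OF Suc.prems Suc.IH[OF Suc.prems]] by simp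
qed

lemma solution_eq_propagator:
  assumes "\<forall>n. x n = T n (x (n + 1))"
  shows "x n = propagator T n k (x (n + int k))"
proof (induction k arbitrary: n)
  case (Suc k)
  have "x n = T n (propagator T (n + 1) k (x (n + 1 + int k)))"
    using assms Suc.IH by metis
  then show ?case by (simp add: add_ac)
qed simp

lemma norm_propagator_le:
  fixes T :: "int \<Rightarrow> 'a::real_normed_vector \<Rightarrow> 'a"
  assumes near_id: "\<And>n w. norm (T n w - w) \<le> \<beta> n * norm w"
    and nonneg: "\<And>n. \<beta> n \<ge> 0"
    and summable: "summable (\<lambda>i. \<beta> (n + int i))"
  shows "norm (propagator T n k w) \<le> exp (\<Sum>i. \<beta> (n + int i)) * norm w"
proof -
  have step: "norm (T m v) \<le> (1 + \<beta> m) * norm v" for m v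
    using norm_triangle_sub[of "T m v" v] near_id[of m v] by (simp add: algebra_simps)
  have "norm (propagator T m j v) \<le> (\<Prod>i<j. 1 + \<beta> (m + int i)) * norm v" for m j v
  proof (induction j arbitrary: m)
    case (Suc j)
    have "norm (propagator T m (Suc j) v) \<le> (1 + \<beta> m) * norm (propagator T (m + 1) j v)"
      using step by simp
    also have "\<dots> \<le> (1 + \<beta> m) * ((\<Prod>i<j. 1 + \<beta> (m + 1 + int i)) * norm v)"
      using Suc.IH nonneg[of m] by (intro mult_left_mono) auto
    also have "\<dots> = (\<Prod>i<Suc j. 1 + \<beta> (m + int i)) * norm v"
      by (simp only: prod.lessThan_Suc_shift) (simp add: add_ac)
    finally show ?case .
  qed simp
  also have "(\<Prod>i<k. 1 + \<beta> (n + int i)) * norm w \<le> exp (\<Sum>i<k. \<beta> (n + int i)) * norm w"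
    using nonneg by (intro mult_right_mono prod_le_exp_sum) auto
  also have "\<dots> \<le> exp (\<Sum>i. \<beta> (n + int i)) * norm w"
    using summable nonneg by (intro mult_right_mono) (auto intro!: sum_le_suminf)
  finally show ?thesis .
qed

lemma filterlim_int_add_const:
  "filterlim (\<lambda>m::int. m + c) at_top at_top" "filterlim (\<lambda>m::int. m + c) at_bot at_bot"
proof -
  have "\<exists>N. \<forall>n\<ge>N. Z \<le> n + c" "\<exists>N. \<forall>n\<le>N. n + c \<le> Z" for Z
    by (rule exI[of _ "Z - c"], simp)+
  then show "filterlim (\<lambda>m::int. m + c) at_top at_top" "filterlim (\<lambda>m::int. m + c) at_bot at_bot"
    unfolding filterlim_at_top filterlim_at_bot eventually_at_top_linorder eventually_at_bot_linorder
    by blast+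
qed

lemma filterlim_at_bot_mirror_int: "(LIM x at_bot. f x :> F) \<longleftrightarrow> (LIM x at_top. f (- x::int) :> F)"
  unfolding filterlim_def at_bot_mirror filtermap_filtermap ..

lemma tendsto_suminf_tail_0:
  fixes \<beta> :: "int \<Rightarrow> real"
  assumes "summable (\<lambda>i. \<beta> (int i))"
  shows "((\<lambda>n. \<Sum>i. \<beta> (n + int i)) \<longlongrightarrow> 0) at_top"
proof (rule filterlim_int_of_nat_at_topD)
  have "(\<lambda>m. (\<Sum>i. \<beta> (int i)) - (\<Sum>i<m. \<beta> (int i))) \<longlonglongrightarrow> (\<Sum>i. \<beta> (int i)) - (\<Sum>i. \<beta> (int i))"
    by (intro tendsto_intros summable_LIMSEQ assms)
  then show "(\<lambda>m. \<Sum>i. \<beta> (int m + int i)) \<longlonglongrightarrow> 0"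
    using suminf_minus_initial_segment[OF assms] by (simp add: add.commute)
qed

lemma near_identity_solution_unique:
  fixes T :: "int \<Rightarrow> 'a::real_normed_vector \<Rightarrow> 'a"
  assumes near_id: "\<And>n w. norm (T n w - w) \<le> \<beta> n * norm w"
    and nonneg: "\<And>n. \<beta> n \<ge> 0"
    and summable: "\<And>n. summable (\<lambda>i. \<beta> (n + int i))"
    and solution: "\<forall>n. x n = T n (x (n + 1))"
    and limit: "(x \<longlongrightarrow> 0) at_top"
  shows "x n = 0"
proof -
  define C where "C = exp (\<Sum>i. \<beta> (n + int i))"
  have le: "norm (x n) \<le> C * norm (x (n + int k))" for k
    using norm_propagator_le[OF near_id nonneg summable] solution_eq_propagator[where x=x and T=T, OF solution]
    unfolding C_def by metis
  have "(\<lambda>k. x (n + int k)) \<longlonglongrightarrow> 0"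
  proof (rule filterlim_compose[OF limit])
    show "filterlim (\<lambda>k. n + int k) at_top sequentially"
      using filterlim_compose[OF filterlim_int_add_const(1) filterlim_int_sequentially]
      by (simp add: add.commute)
  qed
  then have "(\<lambda>k. C * norm (x (n + int k))) \<longlonglongrightarrow> C * 0"
    by (intro tendsto_intros) (simp add: tendsto_norm_zero_iff)
  then have "norm (x n) \<le> C * 0"
    using le by (intro tendsto_lowerbound) auto
  then show ?thesis by simp
qed

lemma norm_propagator_increment_le:
  fixes T :: "int \<Rightarrow> 'a::real_normed_vector \<Rightarrow> 'a"
  assumes linear: "\<And>n. bounded_linear (T n)"
    and near_id: "\<And>n w. norm (T n w - w) \<le> \<beta> n * norm w"
    and nonneg: "\<And>n. \<beta> n \<ge> 0"
    and summable: "summable (\<lambda>i. \<beta> (n + int i))"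
  shows "norm (propagator T n (Suc k) c - propagator T n k c)
           \<le> exp (\<Sum>i. \<beta> (n + int i)) * norm c * \<beta> (n + int k)"
proof -
  have "propagator T n (Suc k) c - propagator T n k c = propagator T n k (T (n + int k) c - c)"
    unfolding propagator_Suc_right
    using linear_diff[OF bounded_linear.linear[OF bounded_linear_propagator[OF linear]]] by simp
  also have "norm \<dots> \<le> exp (\<Sum>i. \<beta> (n + int i)) * norm (T (n + int k) c - c)"
    by (rule norm_propagator_le[OF near_id nonneg summable])
  also have "\<dots> \<le> exp (\<Sum>i. \<beta> (n + int i)) * (\<beta> (n + int k) * norm c)"
    by (rule mult_left_mono[OF near_id]) simp
  finally show ?thesis by (simp add: algebra_simps)
qed

lemma propagator_limit:
  fixes T :: "int \<Rightarrow> 'a::banach \<Rightarrow> 'a" and n :: int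
  assumes linear: "\<And>n. bounded_linear (T n)"
    and near_id: "\<And>n w. norm (T n w - w) \<le> \<beta> n * norm w"
    and nonneg: "\<And>n. \<beta> n \<ge> 0"
    and summable: "\<And>n. summable (\<lambda>i. \<beta> (n + int i))"
  defines "S \<equiv> \<Sum>i. \<beta> (n + int i)"
  shows "(\<lambda>k. propagator T n k c) \<longlonglongrightarrow> lim (\<lambda>k. propagator T n k c)"
    and "norm (lim (\<lambda>k. propagator T n k c) - c) \<le> exp S * norm c * S"
proof -
  define d where "d k = propagator T n (Suc k) c - propagator T n k c" for k
  have norm_d: "norm (d k) \<le> exp S * norm c * \<beta> (n + int k)" for k
    unfolding d_def S_def by (rule norm_propagator_increment_le[OF linear near_id nonneg summable])
  have summable_norm_d: "summable (\<lambda>k. norm (d k))"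
    using norm_d by (intro summable_comparison_test[OF _ summable_mult[OF summable]]) auto
  have "propagator T n k c = c + (\<Sum>i<k. d i)" for k
    unfolding d_def by (simp only: sum_lessThan_telescope[where f="\<lambda>i. propagator T n i c"]) simp
  moreover have "(\<lambda>k. c + (\<Sum>i<k. d i)) \<longlonglongrightarrow> c + suminf d"
    using summable_norm_cancel[OF summable_norm_d] by (intro tendsto_add tendsto_const summable_LIMSEQ)
  ultimately have limit: "(\<lambda>k. propagator T n k c) \<longlonglongrightarrow> c + suminf d"
    by simp
  then show "(\<lambda>k. propagator T n k c) \<longlonglongrightarrow> lim (\<lambda>k. propagator T n k c)"
    by (simp add: limI)
  have "norm (suminf d) \<le> (\<Sum>k. norm (d k))"
    by (rule summable_norm[OF summable_norm_d])
  also have "\<dots> \<le> (\<Sum>k. exp S * norm c * \<beta> (n + int k))"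
    by (rule suminf_le[OF norm_d summable_norm_d summable_mult[OF summable]])
  also have "\<dots> = exp S * norm c * S"
    unfolding S_def by (rule suminf_mult[OF summable])
  finally show "norm (lim (\<lambda>k. propagator T n k c) - c) \<le> exp S * norm c * S"
    using limI[OF limit] by simp
qed

lemma near_identity_solution_exists:
  fixes T :: "int \<Rightarrow> 'a::banach \<Rightarrow> 'a"
  assumes linear: "\<And>n. bounded_linear (T n)"
    and near_id: "\<And>n w. norm (T n w - w) \<le> \<beta> n * norm w"
    and nonneg: "\<And>n. \<beta> n \<ge> 0"
    and summable: "\<And>n. summable (\<lambda>i. \<beta> (n + int i))"
  shows "\<exists>x. (\<forall>n. x n = T n (x (n + 1))) \<and> (x \<longlongrightarrow> c) at_top"
proof -
  define S where "S n = (\<Sum>i. \<beta> (n + int i))" for n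
  define x where "x n = lim (\<lambda>k. propagator T n k c)" for n
  note limit = propagator_limit[OF linear near_id nonneg summable, of _ c, folded x_def S_def]
  have "x n = T n (x (n + 1))" for n
  proof (rule LIMSEQ_unique)
    show "(\<lambda>k. propagator T n (Suc k) c) \<longlonglongrightarrow> x n"
      using limit(1) by (rule LIMSEQ_Suc)
    show "(\<lambda>k. propagator T n (Suc k) c) \<longlonglongrightarrow> T n (x (n + 1))"
      unfolding propagator.simps by (rule bounded_linear.tendsto[OF linear limit(1)])
  qed
  moreover have "(x \<longlongrightarrow> c) at_top"
  proof -
    have "(S \<longlongrightarrow> 0) at_top"
      unfolding S_def using summable[of 0] by (intro tendsto_suminf_tail_0) simp
    then have "((\<lambda>n. exp (S n) * norm c * S n) \<longlongrightarrow> exp 0 * norm c * 0) at_top"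
      by (intro tendsto_intros)
    then have "((\<lambda>n. x n - c) \<longlongrightarrow> 0) at_top"
      by (intro Lim_null_comparison[OF always_eventually[OF allI[OF limit(2)]]]) simp
    then show ?thesis by (simp add: LIM_zero_iff)
  qed
  ultimately show ?thesis by blast
qed

lemma ex1_near_identity_solution:
  fixes T :: "int \<Rightarrow> 'a::banach \<Rightarrow> 'a"
  assumes linear: "\<And>n. bounded_linear (T n)"
    and near_id: "\<And>n w. norm (T n w - w) \<le> \<beta> n * norm w"
    and nonneg: "\<And>n. \<beta> n \<ge> 0"
    and summable: "\<And>n. summable (\<lambda>i. \<beta> (n + int i))"
  shows "\<exists>!x. (\<forall>n. x n = T n (x (n + 1))) \<and> (x \<longlongrightarrow> c) at_top"
proof (rule ex_ex1I)
  show "\<exists>x. (\<forall>n. x n = T n (x (n + 1))) \<and> (x \<longlongrightarrow> c) at_top"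
    by (rule near_identity_solution_exists[OF assms])
next
  fix x y
  assume x: "(\<forall>n. x n = T n (x (n + 1))) \<and> (x \<longlongrightarrow> c) at_top"
    and y: "(\<forall>n. y n = T n (y (n + 1))) \<and> (y \<longlongrightarrow> c) at_top"
  have "x n - y n = T n (x (n + 1) - y (n + 1))" for n
  proof -
    have "x n = T n (x (n + 1))" "y n = T n (y (n + 1))" using x y by blast+
    then show ?thesis using linear_diff[OF bounded_linear.linear[OF linear]] by metis
  qed
  then have "\<forall>n. x n - y n = T n (x (n + 1) - y (n + 1))" by blast
  moreover have "((\<lambda>n. x n - y n) \<longlongrightarrow> 0) at_top"
    using tendsto_diff[OF conjunct2[OF x] conjunct2[OF y]] by simp
  ultimately have "x n - y n = 0" for n
    by (rule near_identity_solution_unique[OF near_id nonneg summable])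
  then show "x = y" by auto
qed

section \<open>Absolutely summable sequences on the integers\<close>

definition abs_summable_int :: "(int \<Rightarrow> 'a::real_normed_vector) \<Rightarrow> bool" where
  "abs_summable_int a \<longleftrightarrow> summable (\<lambda>k. norm (a (int k))) \<and> summable (\<lambda>k. norm (a (- int k)))"

lemma abs_summable_int_tails:
  assumes "abs_summable_int a"
  shows "summable (\<lambda>k. norm (a (n + int k)))" and "summable (\<lambda>k. norm (a (n - int k)))"
proof -
  have "summable (\<lambda>k. norm (a (s * (m + int k))))" if "s = 1 \<or> s = -1" for s m
  proof (cases "m \<ge> 0")
    case True
    have "summable (\<lambda>k. norm (a (s * int (k + nat m))))"
      using assms that summable_iff_shift[of "\<lambda>k. norm (a (s * int k))" "nat m"]
      unfolding abs_summable_int_def by auto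
    then show ?thesis using True by (simp add: add.commute)
  next
    case False
    have "summable (\<lambda>k. norm (a (s * (m + int (k + nat (- m))))))"
      using assms that unfolding abs_summable_int_def using False by auto
    then show ?thesis by (rule summable_iff_shift[THEN iffD1])
  qed
  from this[of 1 n] this[of "-1" "-n"]
  show "summable (\<lambda>k. norm (a (n + int k)))" and "summable (\<lambda>k. norm (a (n - int k)))"
    by simp_all
qed

lemma abs_summable_int_reflect:
  assumes "abs_summable_int a"
  shows "abs_summable_int (\<lambda>m. a (- m - c))"
proof -
  have "(\<lambda>k. norm (a (- int k - c))) = (\<lambda>k. norm (a (- c - int k)))"
    by (rule ext, rule arg_cong[where f = "\<lambda>x. norm (a x)"]) simp
  then show ?thesis
    using abs_summable_int_tails[OF assms, of "- c"] unfolding abs_summable_int_def by simp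
qed

lemma abs_summable_int_shift: "abs_summable_int a \<Longrightarrow> abs_summable_int (\<lambda>m. a (m + c))"
  using abs_summable_int_tails[of a c] by (simp add: abs_summable_int_def add.commute)

lemma abs_summable_int_comparison:
  assumes "abs_summable_int a" and "\<And>n. norm (b n) \<le> C * norm (a n)"
  shows "abs_summable_int b"
proof -
  have "summable (\<lambda>k. norm (b (f k)))" if "summable (\<lambda>k. norm (a (f k)))" for f :: "nat \<Rightarrow> int"
  proof (rule summable_comparison_test')
    show "summable (\<lambda>k. C * norm (a (f k)))" using that by (rule summable_mult)
  qed (use assms(2) in simp)
  from this[of int] this[of "\<lambda>k. - int k"] show ?thesis
    using assms(1) unfolding abs_summable_int_def by simp
qed

lemma abs_summable_int_add:
  assumes "abs_summable_int a" and "abs_summable_int b"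
  shows "abs_summable_int (\<lambda>n. a n + b n)"
proof -
  have "abs_summable_int (\<lambda>n. norm (a n) + norm (b n))"
    using assms unfolding abs_summable_int_def by (auto intro: summable_add)
  then show ?thesis
    by (rule abs_summable_int_comparison[of _ _ 1]) (simp add: norm_triangle_ineq)
qed

lemma abs_summable_int_minus: "abs_summable_int a \<Longrightarrow> abs_summable_int (\<lambda>n. - a n)"
  by (simp add: abs_summable_int_def)

lemma abs_summable_int_diff:
  "abs_summable_int a \<Longrightarrow> abs_summable_int b \<Longrightarrow> abs_summable_int (\<lambda>n. a n - b n)"
  using abs_summable_int_add[of a "\<lambda>n. - b n"] abs_summable_int_minus[of b] by simp

lemma abs_summable_int_tendsto_0:
  assumes "abs_summable_int a"
  shows "(a \<longlongrightarrow> 0) at_top" and "(a \<longlongrightarrow> 0) at_bot"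
proof -
  have "(\<lambda>k. norm (a (int k))) \<longlonglongrightarrow> 0" "(\<lambda>k. norm (a (- int k))) \<longlonglongrightarrow> 0"
    using assms unfolding abs_summable_int_def by (auto intro: summable_LIMSEQ_zero)
  then have "((\<lambda>n. norm (a n)) \<longlongrightarrow> 0) at_top" "((\<lambda>n. norm (a (- n))) \<longlongrightarrow> 0) at_top"
    by (auto intro: filterlim_int_of_nat_at_topD)
  then show "(a \<longlongrightarrow> 0) at_top" "(a \<longlongrightarrow> 0) at_bot"
    unfolding filterlim_at_bot_mirror_int by (simp_all only: tendsto_norm_zero_iff)
qed

lemma bounded_if_tendsto_at_top_at_bot:
  fixes h :: "int \<Rightarrow> 'a::real_normed_vector"
  assumes "(h \<longlongrightarrow> A) at_top" and "(h \<longlongrightarrow> B) at_bot"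
  obtains C where "\<And>n. norm (h n) \<le> C"
proof -
  obtain N1 where N1: "\<And>n. n \<ge> N1 \<Longrightarrow> norm (h n) < norm A + 1"
    using order_tendstoD(2)[OF tendsto_norm[OF assms(1)], of "norm A + 1"]
    unfolding eventually_at_top_linorder by auto
  obtain N2 where N2: "\<And>n. n \<le> N2 \<Longrightarrow> norm (h n) < norm B + 1"
    using order_tendstoD(2)[OF tendsto_norm[OF assms(2)], of "norm B + 1"]
    unfolding eventually_at_bot_linorder by auto
  define C where "C = (norm A + 1) + (norm B + 1) + (\<Sum>m\<in>{N2..N1}. norm (h m))"
  have "norm (h n) \<le> C" for n
  proof -
    have "norm A + 1 \<le> C" "norm B + 1 \<le> C" "(\<Sum>m\<in>{N2..N1}. norm (h m)) \<le> C"
      unfolding C_def using sum_nonneg[of "{N2..N1}" "\<lambda>m. norm (h m)"] by auto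
    moreover have "n \<in> {N2..N1} \<Longrightarrow> norm (h n) \<le> (\<Sum>m\<in>{N2..N1}. norm (h m))"
      by (rule member_le_sum) auto
    ultimately show ?thesis using N1[of n] N2[of n] by fastforce
  qed
  then show ?thesis by (rule that)
qed

lemma abs_summable_int_mult_convergent:
  fixes a b :: "int \<Rightarrow> 'a::real_normed_algebra"
  assumes "abs_summable_int a" and "(b \<longlongrightarrow> B) at_top" and "(b \<longlongrightarrow> B') at_bot"
  shows "abs_summable_int (\<lambda>n. a n * b n)" and "abs_summable_int (\<lambda>n. b n * a n)"
proof -
  obtain C where C: "\<And>n. norm (b n) \<le> C"
    using bounded_if_tendsto_at_top_at_bot[OF assms(2,3)] by blast
  have "norm (a n * b n) \<le> C * norm (a n)" "norm (b n * a n) \<le> C * norm (a n)" for n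
    using norm_mult_ineq[of "a n" "b n"] norm_mult_ineq[of "b n" "a n"]
      mult_left_mono[OF C[of n] norm_ge_zero[of "a n"]]
    by (simp_all add: mult.commute)
  then show "abs_summable_int (\<lambda>n. a n * b n)" and "abs_summable_int (\<lambda>n. b n * a n)"
    by (auto intro: abs_summable_int_comparison[OF assms(1)])
qed

lemma abs_summable_int_cmult:
  fixes a :: "int \<Rightarrow> 'a::real_normed_algebra"
  assumes "abs_summable_int a"
  shows "abs_summable_int (\<lambda>n. c * a n)"
  using abs_summable_int_mult_convergent(2)[OF assms tendsto_const tendsto_const] .

lemma summable_if_square_decay:
  fixes f :: "nat \<Rightarrow> 'a::real_normed_vector"
  assumes "(\<lambda>k. real k ^ 2 * norm (f k)) \<longlonglongrightarrow> 0"
  shows "summable (\<lambda>k. norm (f k))"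
proof (rule summable_comparison_test_ev)
  have "\<forall>\<^sub>F k in sequentially. real k ^ 2 * norm (f k) < 1"
    using assms by (rule order_tendstoD) simp
  then show "\<forall>\<^sub>F k in sequentially. norm (norm (f k)) \<le> inverse (real k ^ 2)"
    using eventually_gt_at_top[of 0]
  proof eventually_elim
    case (elim k)
    then show ?case by (simp add: field_simps)
  qed
  show "summable (\<lambda>k. inverse (real k ^ 2))"
    by (rule inverse_power_summable) simp
qed

lemma rapid_decay_imp_abs_summable_int:
  assumes "rapid_decay q"
  shows "abs_summable_int q"
proof -
  have "((\<lambda>n. real_of_int \<bar>n\<bar> ^ 2 * cmod (q n)) \<longlongrightarrow> 0) at_top"
    and "((\<lambda>n. real_of_int \<bar>- n\<bar> ^ 2 * cmod (q (- n))) \<longlongrightarrow> 0) at_top"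
    using assms unfolding rapid_decay_def filterlim_at_bot_mirror_int by blast+
  from this[THEN filterlim_compose, OF filterlim_int_sequentially]
  have "(\<lambda>k. real k ^ 2 * cmod (q (int k))) \<longlonglongrightarrow> 0"
    and "(\<lambda>k. real k ^ 2 * cmod (q (- int k))) \<longlonglongrightarrow> 0"
    by simp_all
  then show ?thesis
    unfolding abs_summable_int_def by (simp add: summable_if_square_decay)
qed

section \<open>Jost solutions of two-by-two systems\<close>

lemma tendsto_Pair_iff:
  "(f \<longlongrightarrow> (a, b)) F \<longleftrightarrow> ((\<lambda>x. fst (f x)) \<longlongrightarrow> a) F \<and> ((\<lambda>x. snd (f x)) \<longlongrightarrow> b) F"
proof
  assume "((\<lambda>x. fst (f x)) \<longlongrightarrow> a) F \<and> ((\<lambda>x. snd (f x)) \<longlongrightarrow> b) F"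
  then have "((\<lambda>x. (fst (f x), snd (f x))) \<longlongrightarrow> (a, b)) F" by (intro tendsto_Pair) auto
  then show "(f \<longlongrightarrow> (a, b)) F" by simp
qed (use tendsto_fst tendsto_snd in fastforce)

lemma tendsto_mult_unimodular_0_iff:
  fixes f u :: "'b \<Rightarrow> 'a::real_normed_div_algebra"
  assumes "\<And>x. norm (u x) = 1"
  shows "((\<lambda>x. f x * u x) \<longlongrightarrow> 0) F \<longleftrightarrow> (f \<longlongrightarrow> 0) F"
proof -
  have "((\<lambda>x. f x * u x) \<longlongrightarrow> 0) F \<longleftrightarrow> ((\<lambda>x. norm (f x * u x)) \<longlongrightarrow> 0) F"
    by (rule tendsto_norm_zero_iff[symmetric])
  also have "\<dots> \<longleftrightarrow> ((\<lambda>x. norm (f x)) \<longlongrightarrow> 0) F"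
    by (simp add: norm_mult assms)
  finally show ?thesis by (simp add: tendsto_norm_zero_iff)
qed

definition mat2 :: "complex \<Rightarrow> complex \<Rightarrow> complex \<Rightarrow> complex \<Rightarrow> complex \<times> complex \<Rightarrow> complex \<times> complex"
  where "mat2 a b c d w = (a * fst w + b * snd w, c * fst w + d * snd w)"

definition twist :: "complex \<Rightarrow> int \<Rightarrow> complex \<times> complex \<Rightarrow> complex \<times> complex"
  where "twist z n w = (fst w * z powi n, snd w * z powi (- n))"

lemma bounded_linear_mat2: "bounded_linear (mat2 a b c d)"
  unfolding mat2_def
  by (intro bounded_linear_Pair bounded_linear_add
      bounded_linear_compose[OF bounded_linear_mult_right bounded_linear_fst]
      bounded_linear_compose[OF bounded_linear_mult_right bounded_linear_snd])

lemma norm_mat2_le: "norm (mat2 a b c d w) \<le> (norm a + norm b + norm c + norm d) * norm w"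
proof -
  have w: "norm (fst w) \<le> norm w" "norm (snd w) \<le> norm w"
    using norm_fst_le[of "fst w" "snd w"] norm_snd_le[of "snd w" "fst w"] by simp_all
  have "norm (mat2 a b c d w) \<le> norm (a * fst w + b * snd w) + norm (c * fst w + d * snd w)"
    unfolding mat2_def by (rule norm_Pair_le)
  also have "\<dots> \<le> (norm a * norm w + norm b * norm w) + (norm c * norm w + norm d * norm w)"
    by (intro add_mono order_trans[OF norm_triangle_ineq])
       (simp_all add: norm_mult mult_left_mono w)
  finally show ?thesis by (simp add: algebra_simps)
qed

lemma mat2_diff: "mat2 a b c d w - mat2 a' b' c' d' w = mat2 (a - a') (b - b') (c - c') (d - d') w"
  by (simp add: mat2_def algebra_simps)

lemma mat2_mat2:
  "mat2 a' b' c' d' (mat2 a b c d w) = mat2 (a' * a + b' * c) (a' * b + b' * d) (c' * a + d' * c) (c' * b + d' * d) w"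
  by (simp add: mat2_def algebra_simps)

lemma mat2_inverse:
  assumes "a * d - b * c \<noteq> 0"
  defines "\<delta> \<equiv> a * d - b * c"
  shows "mat2 a b c d (mat2 (d / \<delta>) (- b / \<delta>) (- c / \<delta>) (a / \<delta>) w) = w"
    and "mat2 (d / \<delta>) (- b / \<delta>) (- c / \<delta>) (a / \<delta>) (mat2 a b c d w) = w"
proof -
  have "\<delta> \<noteq> 0" using assms(1) by (simp add: \<delta>_def)
  then have "a * (d / \<delta>) + b * (- c / \<delta>) = 1" "a * (- b / \<delta>) + b * (a / \<delta>) = 0"
    "c * (d / \<delta>) + d * (- c / \<delta>) = 0" "c * (- b / \<delta>) + d * (a / \<delta>) = 1"
    "d / \<delta> * a + - b / \<delta> * c = 1" "d / \<delta> * b + - b / \<delta> * d = 0"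
    "- c / \<delta> * a + a / \<delta> * c = 0" "- c / \<delta> * b + a / \<delta> * d = 1"
    by (simp_all add: field_simps) (simp_all add: \<delta>_def algebra_simps)
  then show "mat2 a b c d (mat2 (d / \<delta>) (- b / \<delta>) (- c / \<delta>) (a / \<delta>) w) = w"
    and "mat2 (d / \<delta>) (- b / \<delta>) (- c / \<delta>) (a / \<delta>) (mat2 a b c d w) = w"
    unfolding mat2_mat2 by (simp_all add: mat2_def)
qed

lemma twist_0 [simp]: "twist z 0 w = w"
  by (simp add: twist_def)

lemma twist_twist:
  assumes "z \<noteq> 0"
  shows "twist z m (twist z n w) = twist z (n + m) w"
proof -
  have "z powi n * z powi m = z powi (n + m)" "z powi (- n) * z powi (- m) = z powi (- (n + m))"
    using power_int_add[of z n m] power_int_add[of z "- n" "- m"] assms by simp_all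
  then show ?thesis by (simp add: twist_def mult.assoc)
qed

lemma twist_diff: "twist z n v - twist z n w = twist z n (v - w)"
  by (simp add: twist_def algebra_simps)

lemma norm_twist: "cmod z = 1 \<Longrightarrow> norm (twist z n w) = norm w"
  by (cases w) (simp add: twist_def norm_Pair norm_mult norm_power_int)

lemma mat2_diagonal_eq_twist: "mat2 z 0 0 (inverse z) w = twist z 1 w"
  by (simp add: mat2_def twist_def mult.commute power_int_minus)

lemma twist_inverse_base: "twist (inverse z) n w = twist z (- n) w"
  by (simp add: twist_def power_int_inverse power_int_minus)

lemma twist_eq_iff: "z \<noteq> 0 \<Longrightarrow> twist z n v = twist z n w \<longleftrightarrow> v = w"
  by (metis add.right_inverse twist_0 twist_twist)

lemma ex1_bij_transfer:
  assumes "\<exists>!x. Q x" and "\<And>f. P f \<longleftrightarrow> Q (H f)" and "\<And>f. G (H f) = f" and "\<And>x. H (G x) = x"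
  shows "\<exists>!f. P f"
  using assms by metis

lemma norm_twisted_mat2_diff_le:
  assumes "cmod z = 1"
  shows "norm (twist z n (mat2 a b c d (twist z (- (n + 1)) w)) - w)
           \<le> (norm (a - z) + norm b + norm c + norm (d - inverse z)) * norm w"
proof -
  define v where "v = twist z (- (n + 1)) w"
  have "z \<noteq> 0" using assms by auto
  then have "w = twist z n (mat2 z 0 0 (inverse z) v)"
    unfolding v_def mat2_diagonal_eq_twist by (simp add: twist_twist)
  then have "twist z n (mat2 a b c d v) - w = twist z n (mat2 (a - z) (b - 0) (c - 0) (d - inverse z) v)"
    by (metis mat2_diff twist_diff)
  then have "norm (twist z n (mat2 a b c d v) - w) = norm (mat2 (a - z) b c (d - inverse z) v)"
    using assms by (simp add: norm_twist)
  also have "\<dots> \<le> (norm (a - z) + norm b + norm c + norm (d - inverse z)) * norm v"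
    by (rule norm_mat2_le)
  finally show ?thesis
    using assms by (simp add: v_def norm_twist)
qed

lemma ex1_solution_mat2_at_top:
  fixes a b c d :: "int \<Rightarrow> complex"
  assumes z: "cmod z = 1"
    and a: "abs_summable_int (\<lambda>n. a n - z)" and b: "abs_summable_int b"
    and c: "abs_summable_int c" and d: "abs_summable_int (\<lambda>n. d n - inverse z)"
  shows "\<exists>!f. solves (\<lambda>n. mat2 (a n) (b n) (c n) (d n)) f \<and> ((\<lambda>n. twist z n (f n)) \<longlongrightarrow> w) at_top"
proof -
  have z0: "z \<noteq> 0" using z by auto
  define T where "T n v = twist z n (mat2 (a n) (b n) (c n) (d n) (twist z (- (n + 1)) v))" for n v
  define \<beta> where "\<beta> n = norm (a n - z) + norm (b n) + norm (c n) + norm (d n - inverse z)" for n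
  have "\<exists>!x. (\<forall>n. x n = T n (x (n + 1))) \<and> (x \<longlongrightarrow> w) at_top"
  proof (rule ex1_near_identity_solution)
    show "bounded_linear (T n)" for n
      unfolding T_def twist_def
      by (intro bounded_linear_Pair bounded_linear_compose[OF bounded_linear_mult_left]
          bounded_linear_compose[OF bounded_linear_fst] bounded_linear_compose[OF bounded_linear_snd]
          bounded_linear_compose[OF bounded_linear_mat2] bounded_linear_ident[unfolded id_def])
    show "norm (T n v - v) \<le> \<beta> n * norm v" for n v
      unfolding T_def \<beta>_def by (rule norm_twisted_mat2_diff_le[OF z])
    show "\<beta> n \<ge> 0" for n
      unfolding \<beta>_def by simp
    have "abs_summable_int \<beta>"
      unfolding \<beta>_def using a b c d
      by (intro abs_summable_int_add) (simp_all add: abs_summable_int_def)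
    then show "summable (\<lambda>k. \<beta> (n + int k))" for n
      using abs_summable_int_tails(1)[of \<beta> n] by (simp add: \<beta>_def)
  qed
  then show ?thesis
  proof (rule ex1_bij_transfer[where H = "\<lambda>f n. twist z n (f n)" and G = "\<lambda>x n. twist z (- n) (x n)"])
    fix f :: "int \<Rightarrow> complex \<times> complex"
    have "twist z (- (n + 1)) (twist z (n + 1) (f (n + 1))) = f (n + 1)" for n
      using z0 by (simp add: twist_twist)
    then show "solves (\<lambda>n. mat2 (a n) (b n) (c n) (d n)) f \<and> ((\<lambda>n. twist z n (f n)) \<longlongrightarrow> w) at_top
      \<longleftrightarrow> (\<forall>n. twist z n (f n) = T n (twist z (n + 1) (f (n + 1))))
          \<and> ((\<lambda>n. twist z n (f n)) \<longlongrightarrow> w) at_top"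
      unfolding solves_def T_def using twist_eq_iff[OF z0] by simp
  qed (use z0 in \<open>simp_all add: twist_twist\<close>)
qed

lemma abs_summable_int_det_minus_1:
  fixes a b c d :: "int \<Rightarrow> complex"
  assumes z: "z \<noteq> 0"
    and a: "abs_summable_int (\<lambda>n. a n - z)" and b: "abs_summable_int b"
    and c: "abs_summable_int c" and d: "abs_summable_int (\<lambda>n. d n - inverse z)"
  shows "abs_summable_int (\<lambda>n. a n * d n - b n * c n - 1)"
proof -
  define a' where "a' n = a n - z" for n
  define d' where "d' n = d n - inverse z" for n
  have a': "abs_summable_int a'" and d': "abs_summable_int d'"
    unfolding a'_def d'_def by (fact a d)+
  have "(\<lambda>n. a n * d n - b n * c n - 1) = (\<lambda>n. a' n * d' n + a' n * inverse z + d' n * z - b n * c n)"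
    using z unfolding a'_def d'_def by (simp add: fun_eq_iff algebra_simps)
  moreover have "abs_summable_int (\<lambda>n. a' n * d' n + a' n * inverse z + d' n * z - b n * c n)"
    using abs_summable_int_tendsto_0[OF c] abs_summable_int_tendsto_0[OF d']
    by (intro abs_summable_int_add abs_summable_int_diff
        abs_summable_int_mult_convergent(1)[OF _ tendsto_const tendsto_const]
        abs_summable_int_mult_convergent(1) a' b d')
  ultimately show ?thesis by simp
qed

lemma abs_summable_int_inverse_deviation:
  fixes a b c d :: "int \<Rightarrow> complex"
  assumes z: "z \<noteq> 0"
    and a: "abs_summable_int (\<lambda>n. a n - z)" and b: "abs_summable_int b"
    and c: "abs_summable_int c" and d: "abs_summable_int (\<lambda>n. d n - inverse z)"
    and det: "\<And>n. a n * d n - b n * c n \<noteq> 0"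
  shows "abs_summable_int (\<lambda>n. d n / (a n * d n - b n * c n) - inverse z)"
    and "abs_summable_int (\<lambda>n. - b n / (a n * d n - b n * c n))"
    and "abs_summable_int (\<lambda>n. - c n / (a n * d n - b n * c n))"
    and "abs_summable_int (\<lambda>n. a n / (a n * d n - b n * c n) - inverse (inverse z))"
proof -
  define a' where "a' n = a n - z" for n
  define d' where "d' n = d n - inverse z" for n
  define \<delta> where "\<delta> n = a n * d n - b n * c n" for n
  define e where "e n = \<delta> n - 1" for n
  have a': "abs_summable_int a'" and d': "abs_summable_int d'"
    unfolding a'_def d'_def by (fact a d)+
  have e: "abs_summable_int e"
    unfolding e_def \<delta>_def by (rule abs_summable_int_det_minus_1[OF z a b c d])
  have "((\<lambda>n. inverse (e n + 1)) \<longlongrightarrow> inverse (0 + 1)) F" if "(e \<longlongrightarrow> 0) F" for F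
    using that by (intro tendsto_inverse tendsto_add tendsto_const) simp_all
  then have inv_\<delta>: "((\<lambda>n. inverse (\<delta> n)) \<longlongrightarrow> 1) at_top" "((\<lambda>n. inverse (\<delta> n)) \<longlongrightarrow> 1) at_bot"
    using abs_summable_int_tendsto_0[OF e] by (simp_all add: e_def)
  have "\<delta> n \<noteq> 0" for n unfolding \<delta>_def by (rule det)
  then have "d n / \<delta> n - inverse z = (d' n - e n * inverse z) * inverse (\<delta> n)"
    "- b n / \<delta> n = - b n * inverse (\<delta> n)" "- c n / \<delta> n = - c n * inverse (\<delta> n)"
    "a n / \<delta> n - inverse (inverse z) = (a' n - e n * z) * inverse (\<delta> n)" for n
    using z unfolding a'_def d'_def e_def by (simp_all add: field_simps)
  moreover have "abs_summable_int (\<lambda>n. (d' n - e n * inverse z) * inverse (\<delta> n))"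
    "abs_summable_int (\<lambda>n. - b n * inverse (\<delta> n))" "abs_summable_int (\<lambda>n. - c n * inverse (\<delta> n))"
    "abs_summable_int (\<lambda>n. (a' n - e n * z) * inverse (\<delta> n))"
    by (intro abs_summable_int_mult_convergent(1)[OF _ inv_\<delta>] abs_summable_int_diff abs_summable_int_minus
        abs_summable_int_mult_convergent(1)[OF _ tendsto_const tendsto_const] a' b c d' e)+
  ultimately show "abs_summable_int (\<lambda>n. d n / (a n * d n - b n * c n) - inverse z)"
    and "abs_summable_int (\<lambda>n. - b n / (a n * d n - b n * c n))"
    and "abs_summable_int (\<lambda>n. - c n / (a n * d n - b n * c n))"
    and "abs_summable_int (\<lambda>n. a n / (a n * d n - b n * c n) - inverse (inverse z))"
    unfolding \<delta>_def by simp_all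
qed

lemma solves_reflect:
  assumes "\<And>n w. M' n (M n w) = w" and "\<And>n w. M n (M' n w) = w"
  shows "solves M f \<longleftrightarrow> solves (\<lambda>m. M' (- m - 1)) (\<lambda>m. f (- m))"
proof -
  have "solves M f \<longleftrightarrow> (\<forall>n. f (n + 1) = M' n (f n))"
    unfolding solves_def using assms by metis
  also have "\<dots> \<longleftrightarrow> (\<forall>m. f (- m) = M' (- m - 1) (f (- m - 1)))"
  proof
    assume "\<forall>n. f (n + 1) = M' n (f n)"
    then show "\<forall>m. f (- m) = M' (- m - 1) (f (- m - 1))"
      by (metis diff_add_cancel)
  next
    assume "\<forall>m. f (- m) = M' (- m - 1) (f (- m - 1))"
    then show "\<forall>n. f (n + 1) = M' n (f n)"
      by (metis add_diff_cancel_right' minus_diff_eq minus_minus uminus_add_conv_diff)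
  qed
  also have "\<dots> \<longleftrightarrow> solves (\<lambda>m. M' (- m - 1)) (\<lambda>m. f (- m))"
    unfolding solves_def by (simp add: algebra_simps)
  finally show ?thesis .
qed

lemma ex1_solution_mat2_at_bot:
  fixes a b c d :: "int \<Rightarrow> complex"
  assumes z: "cmod z = 1"
    and a: "abs_summable_int (\<lambda>n. a n - z)" and b: "abs_summable_int b"
    and c: "abs_summable_int c" and d: "abs_summable_int (\<lambda>n. d n - inverse z)"
    and det: "\<And>n. a n * d n - b n * c n \<noteq> 0"
  shows "\<exists>!f. solves (\<lambda>n. mat2 (a n) (b n) (c n) (d n)) f \<and> ((\<lambda>n. twist z n (f n)) \<longlongrightarrow> w) at_bot"
proof -
  define \<delta> where "\<delta> n = a n * d n - b n * c n" for n
  define M' where "M' n = mat2 (d n / \<delta> n) (- b n / \<delta> n) (- c n / \<delta> n) (a n / \<delta> n)" for n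
  have z': "cmod (inverse z) = 1" using z by (simp add: norm_inverse)
  have "z \<noteq> 0" using z by auto
  note inverse_deviation = abs_summable_int_inverse_deviation[OF this a b c d det]
  have "\<exists>!g. solves (\<lambda>m. M' (- m - 1)) g \<and> ((\<lambda>m. twist (inverse z) m (g m)) \<longlongrightarrow> w) at_top"
    unfolding M'_def \<delta>_def
    using z z' abs_summable_int_reflect[OF inverse_deviation(1), of 1]
      abs_summable_int_reflect[OF inverse_deviation(2), of 1]
      abs_summable_int_reflect[OF inverse_deviation(3), of 1]
      abs_summable_int_reflect[OF inverse_deviation(4), of 1]
    by (intro ex1_solution_mat2_at_top) auto
  then show ?thesis
  proof (rule ex1_bij_transfer[where H = "\<lambda>f m. f (- m)" and G = "\<lambda>g n. g (- n)"])
    fix f :: "int \<Rightarrow> complex \<times> complex"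
    have "solves (\<lambda>n. mat2 (a n) (b n) (c n) (d n)) f \<longleftrightarrow> solves (\<lambda>m. M' (- m - 1)) (\<lambda>m. f (- m))"
      unfolding M'_def \<delta>_def using mat2_inverse[OF det] by (intro solves_reflect) auto
    moreover have "((\<lambda>n. twist z n (f n)) \<longlongrightarrow> w) at_bot
        \<longleftrightarrow> ((\<lambda>m. twist (inverse z) m (f (- m))) \<longlongrightarrow> w) at_top"
      unfolding filterlim_at_bot_mirror_int twist_inverse_base ..
    ultimately show "solves (\<lambda>n. mat2 (a n) (b n) (c n) (d n)) f \<and> ((\<lambda>n. twist z n (f n)) \<longlongrightarrow> w) at_bot
      \<longleftrightarrow> solves (\<lambda>m. M' (- m - 1)) (\<lambda>m. f (- m)) \<and> ((\<lambda>m. twist (inverse z) m (f (- m))) \<longlongrightarrow> w) at_top"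
      by simp
  qed simp_all
qed

lemma
  assumes "cmod z = 1"
  shows psi_cond_iff_twist: "psi_cond z f \<longleftrightarrow> ((\<lambda>n. twist z n (f n)) \<longlongrightarrow> (0, 1)) at_top"
    and psibar_cond_iff_twist: "psibar_cond z f \<longleftrightarrow> ((\<lambda>n. twist z n (f n)) \<longlongrightarrow> (1, 0)) at_top"
    and phi_cond_iff_twist: "phi_cond z f \<longleftrightarrow> ((\<lambda>n. twist z n (f n)) \<longlongrightarrow> (1, 0)) at_bot"
    and phibar_cond_iff_twist: "phibar_cond z f \<longleftrightarrow> ((\<lambda>n. twist z n (f n)) \<longlongrightarrow> (0, 1)) at_bot"
proof -
  have "norm (z powi n) = 1" for n using assms by (simp add: norm_power_int)
  note unimodular = tendsto_mult_unimodular_0_iff[where u = "\<lambda>n. z powi n", OF this]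
    tendsto_mult_unimodular_0_iff[where u = "\<lambda>n. z powi (- n)", OF this]
  show "psi_cond z f \<longleftrightarrow> ((\<lambda>n. twist z n (f n)) \<longlongrightarrow> (0, 1)) at_top"
    and "psibar_cond z f \<longleftrightarrow> ((\<lambda>n. twist z n (f n)) \<longlongrightarrow> (1, 0)) at_top"
    and "phi_cond z f \<longleftrightarrow> ((\<lambda>n. twist z n (f n)) \<longlongrightarrow> (1, 0)) at_bot"
    and "phibar_cond z f \<longleftrightarrow> ((\<lambda>n. twist z n (f n)) \<longlongrightarrow> (0, 1)) at_bot"
    unfolding psi_cond_def psibar_cond_def phi_cond_def phibar_cond_def tendsto_Pair_iff twist_def
    by (simp_all only: fst_conv snd_conv unimodular)
qed

lemma ex1_jost_mat2:
  fixes a b c d :: "int \<Rightarrow> complex"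
  assumes z: "cmod z = 1"
    and a: "abs_summable_int (\<lambda>n. a n - z)" and b: "abs_summable_int b"
    and c: "abs_summable_int c" and d: "abs_summable_int (\<lambda>n. d n - inverse z)"
    and det: "\<And>n. a n * d n - b n * c n \<noteq> 0"
  defines "M \<equiv> \<lambda>n. mat2 (a n) (b n) (c n) (d n)"
  shows "\<exists>!f. solves M f \<and> psi_cond z f" and "\<exists>!f. solves M f \<and> psibar_cond z f"
    and "\<exists>!f. solves M f \<and> phi_cond z f" and "\<exists>!f. solves M f \<and> phibar_cond z f"
  unfolding M_def psi_cond_iff_twist[OF z] psibar_cond_iff_twist[OF z]
    phi_cond_iff_twist[OF z] phibar_cond_iff_twist[OF z]
  by (rule ex1_solution_mat2_at_top[OF z a b c d] ex1_solution_mat2_at_bot[OF z a b c d det])+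

lemma Qstep_eq_mat2:
  "Qstep q r z n = mat2 z ((z - inverse z) * q n) (z * r n) (inverse z + (z - inverse z) * q n * r n)"
  by (simp add: fun_eq_iff Qstep_def mat2_def mult.assoc)

lemma Ustep_eq_mat2: "Ustep a b z n = mat2 z (z * a n) (inverse z * b n) (inverse z)"
  by (simp add: fun_eq_iff Ustep_def mat2_def mult.assoc)

lemma ex1_jost_Qstep:
  assumes z: "cmod z = 1" and q: "abs_summable_int q" and r: "abs_summable_int r"
  shows "\<exists>!f. solves (Qstep q r z) f \<and> psi_cond z f" and "\<exists>!f. solves (Qstep q r z) f \<and> psibar_cond z f"
    and "\<exists>!f. solves (Qstep q r z) f \<and> phi_cond z f" and "\<exists>!f. solves (Qstep q r z) f \<and> phibar_cond z f"
proof -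
  have "z \<noteq> 0" using z by auto
  then have det: "z * (inverse z + (z - inverse z) * q n * r n) - (z - inverse z) * q n * (z * r n) \<noteq> 0" for n
    by (simp add: algebra_simps)
  have "abs_summable_int (\<lambda>n. inverse z + (z - inverse z) * q n * r n - inverse z)"
    using abs_summable_int_tendsto_0[OF r]
    by (simp add: abs_summable_int_mult_convergent(1) abs_summable_int_cmult q)
  moreover have "abs_summable_int (\<lambda>n. z - z)"
    by (simp add: abs_summable_int_def)
  ultimately show "\<exists>!f. solves (Qstep q r z) f \<and> psi_cond z f" and "\<exists>!f. solves (Qstep q r z) f \<and> psibar_cond z f"
    and "\<exists>!f. solves (Qstep q r z) f \<and> phi_cond z f" and "\<exists>!f. solves (Qstep q r z) f \<and> phibar_cond z f"
    using ex1_jost_mat2[OF z _ abs_summable_int_cmult[OF q] abs_summable_int_cmult[OF r] _ det]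
    unfolding Qstep_eq_mat2 by blast+
qed

lemma ex1_jost_Ustep:
  assumes z: "cmod z = 1" and a: "abs_summable_int a" and b: "abs_summable_int b"
    and det: "\<And>n. a n * b n \<noteq> 1"
  shows "\<exists>!f. solves (Ustep a b z) f \<and> psi_cond z f" and "\<exists>!f. solves (Ustep a b z) f \<and> psibar_cond z f"
    and "\<exists>!f. solves (Ustep a b z) f \<and> phi_cond z f" and "\<exists>!f. solves (Ustep a b z) f \<and> phibar_cond z f"
proof -
  have "z \<noteq> 0" using z by auto
  then have "z * inverse z - z * a n * (inverse z * b n) = 1 - a n * b n" for n
    by (simp add: field_simps)
  then have det': "z * inverse z - z * a n * (inverse z * b n) \<noteq> 0" for n
    using det[of n] by simp
  have "abs_summable_int (\<lambda>n. z - z)" "abs_summable_int (\<lambda>n. inverse z - inverse z)"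
    by (simp_all add: abs_summable_int_def)
  then show "\<exists>!f. solves (Ustep a b z) f \<and> psi_cond z f" and "\<exists>!f. solves (Ustep a b z) f \<and> psibar_cond z f"
    and "\<exists>!f. solves (Ustep a b z) f \<and> phi_cond z f" and "\<exists>!f. solves (Ustep a b z) f \<and> phibar_cond z f"
    using ex1_jost_mat2[OF z _ abs_summable_int_cmult[OF a] abs_summable_int_cmult[OF b] _ det']
    unfolding Ustep_eq_mat2 by blast+
qed

lemma tendsto_twist_mat2:
  fixes f :: "int \<Rightarrow> complex \<times> complex" and F :: "int filter"
  assumes z: "cmod z = 1"
    and \<alpha>: "(\<alpha> \<longlongrightarrow> A) F" and \<beta>: "(\<beta> \<longlongrightarrow> 0) F"
    and \<gamma>: "(\<gamma> \<longlongrightarrow> 0) F" and \<delta>: "(\<delta> \<longlongrightarrow> D) F"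
    and f: "((\<lambda>n. twist z n (f n)) \<longlongrightarrow> (x, y)) F"
  shows "((\<lambda>n. twist z n (mat2 (\<alpha> n) (\<beta> n) (\<gamma> n) (\<delta> n) (f n))) \<longlongrightarrow> (A * x, D * y)) F"
proof -
  have "z \<noteq> 0" using z by auto
  then have inv: "z powi n * z powi (- n) = 1" for n
    using power_int_add[of z n "- n"] by simp
  have "(a * u + b * v) * z powi n = a * (u * z powi n) + b * (z powi n * z powi n) * (v * z powi (- n))"
    "(c * u + d * v) * z powi (- n) = c * (z powi (- n) * z powi (- n)) * (u * z powi n) + d * (v * z powi (- n))"
    for a b c d u v n
    using inv[of n] by algebra+
  then have twist_mat2: "twist z n (mat2 (\<alpha> n) (\<beta> n) (\<gamma> n) (\<delta> n) (f n))
      = mat2 (\<alpha> n) (\<beta> n * (z powi n * z powi n)) (\<gamma> n * (z powi (- n) * z powi (- n))) (\<delta> n)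
          (twist z n (f n))" for n
    by (simp add: twist_def mat2_def)
  have "norm (z powi n * z powi n) = 1" "norm (z powi (- n) * z powi (- n)) = 1" for n
    using z by (simp_all add: norm_mult norm_power_int)
  then have "((\<lambda>n. \<beta> n * (z powi n * z powi n)) \<longlongrightarrow> 0) F"
    and "((\<lambda>n. \<gamma> n * (z powi (- n) * z powi (- n))) \<longlongrightarrow> 0) F"
    using \<beta> \<gamma> by (simp_all add: tendsto_mult_unimodular_0_iff)
  moreover have "((\<lambda>n. fst (twist z n (f n))) \<longlongrightarrow> x) F" and "((\<lambda>n. snd (twist z n (f n))) \<longlongrightarrow> y) F"
    using f by (simp_all add: tendsto_Pair_iff)
  ultimately have "((\<lambda>n. mat2 (\<alpha> n) (\<beta> n * (z powi n * z powi n)) (\<gamma> n * (z powi (- n) * z powi (- n)))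
      (\<delta> n) (twist z n (f n))) \<longlongrightarrow> (A * x + 0 * y, 0 * x + D * y)) F"
    unfolding mat2_def using \<alpha> \<delta> by (intro tendsto_Pair tendsto_add tendsto_mult)
  then show ?thesis
    unfolding twist_mat2 by simp
qed

lemma the_solution_transfer:
  assumes S: "\<exists>!f. solves S f \<and> P f" and T: "\<exists>!f. solves T f \<and> R f"
    and intertwine: "\<And>n w. M n (T n w) = S n (M (n + 1) w)"
    and preserves: "\<And>f. R f \<Longrightarrow> P (\<lambda>n. M n (f n))"
  shows "(THE f. solves S f \<and> P f) = (\<lambda>n. M n ((THE f. solves T f \<and> R f) n))"
proof (rule the1_equality[OF S])
  define g where "g = (THE f. solves T f \<and> R f)"
  have g: "solves T g" "R g"
    unfolding g_def using theI'[OF T] by simp_all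
  have "solves S (\<lambda>n. M n (g n))"
    using g(1) unfolding solves_def by (metis intertwine)
  then show "solves S (\<lambda>n. M n (g n)) \<and> P (\<lambda>n. M n (g n))"
    using preserves[OF g(2)] by simp
qed

section \<open>Infinite products over the integers\<close>

lemma product_recursion_solution:
  fixes a :: "int \<Rightarrow> complex"
  assumes a: "abs_summable_int a"
  obtains x where "\<And>n. x n = x (n - 1) * (1 + a n)" and "(x \<longlongrightarrow> 1) at_bot"
proof -
  have "\<exists>y. (\<forall>m. y m = (1 + a (- m)) * y (m + 1)) \<and> (y \<longlongrightarrow> 1) at_top"
  proof (rule near_identity_solution_exists)
    show "bounded_linear (\<lambda>w. (1 + a (- m)) * w)" for m
      by (rule bounded_linear_mult_right)
    show "norm ((1 + a (- m)) * w - w) \<le> norm (a (- m)) * norm w" for m w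
      by (simp add: algebra_simps norm_mult)
    show "summable (\<lambda>k. norm (a (- (n + int k))))" for n
      using abs_summable_int_tails(2)[OF a, of "- n"] by simp
  qed simp
  then obtain y where y: "\<And>m. y m = (1 + a (- m)) * y (m + 1)" and "(y \<longlongrightarrow> 1) at_top"
    by blast
  show ?thesis
  proof (rule that)
    show "y (- n) = y (- (n - 1)) * (1 + a n)" for n
      using y[of "- n"] by (simp add: mult.commute)
    show "((\<lambda>n. y (- n)) \<longlongrightarrow> 1) at_bot"
      unfolding filterlim_at_bot_mirror_int using \<open>(y \<longlongrightarrow> 1) at_top\<close> by simp
  qed
qed

lemma product_recursion_nonzero:
  fixes x a :: "int \<Rightarrow> 'a::real_normed_field"
  assumes rec: "\<And>n. x n = x (n - 1) * (1 + a n)" and nonzero: "\<And>j. 1 + a j \<noteq> 0"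
    and lim: "(x \<longlongrightarrow> 1) at_bot"
  shows "x n \<noteq> 0"
proof
  assume "x n = 0"
  have vanish: "x (n - int k) = 0" for k
  proof (induction k)
    case (Suc k)
    have "x (n - int k) = x (n - int (Suc k)) * (1 + a (n - int k))"
      using rec[of "n - int k"] by (simp add: algebra_simps)
    then show ?case using Suc.IH nonzero[of "n - int k"] by simp
  qed (simp add: \<open>x n = 0\<close>)
  have "\<forall>\<^sub>F m in at_bot. x m = 0"
    unfolding eventually_at_bot_linorder
  proof (intro exI allI impI)
    fix m assume "m \<le> n"
    then show "x m = 0" using vanish[of "nat (n - m)"] by simp
  qed
  then have "(x \<longlongrightarrow> 0) at_bot" by (rule tendsto_eventually)
  with lim show False using tendsto_unique[OF trivial_limit_at_bot_linorder] by fastforce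
qed

lemma partial_product_eq_quotient:
  fixes x a :: "int \<Rightarrow> 'a::field"
  assumes rec: "\<And>n. x n = x (n - 1) * (1 + a n)" and nonzero: "x (m - 1) \<noteq> 0" and "m \<le> n"
  shows "(\<Prod>j\<in>{m..n}. 1 + a j) = x n / x (m - 1)"
proof -
  have "(\<Prod>j\<in>{m..m + int k}. 1 + a j) = x (m + int k) / x (m - 1)" for k
  proof (induction k)
    case 0
    show ?case using rec[of m] nonzero by simp
  next
    case (Suc k)
    have "{m..m + int (Suc k)} = insert (m + int k + 1) {m..m + int k}" by auto
    then have "(\<Prod>j\<in>{m..m + int (Suc k)}. 1 + a j) = (1 + a (m + int k + 1)) * (x (m + int k) / x (m - 1))"
      using Suc.IH by simp
    also have "\<dots> = x (m + int (Suc k)) / x (m - 1)"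
      using rec[of "m + int k + 1"] by (simp add: algebra_simps)
    finally show ?case .
  qed
  from this[of "nat (n - m)"] show ?thesis using \<open>m \<le> n\<close> by simp
qed

lemma product_recursion_tendsto_at_top:
  fixes a :: "int \<Rightarrow> complex"
  assumes a: "abs_summable_int a" and nonzero: "\<And>j. 1 + a j \<noteq> 0"
    and rec: "\<And>n. x n = x (n - 1) * (1 + a n)" and "x 0 \<noteq> 0"
  obtains L where "L \<noteq> 0" and "(x \<longlongrightarrow> L) at_top"
proof -
  define g where "g i = 1 + a (int i + 1)" for i
  have "summable (\<lambda>i. norm (g i - 1))"
    using abs_summable_int_tails(1)[OF a, of 1] unfolding g_def by (simp add: add.commute)
  then have g: "convergent_prod g"
    by (intro abs_convergent_prod_imp_convergent_prod summable_imp_abs_convergent_prod)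
  have x_nat: "x (int k) = x 0 * prod g {..<k}" for k
  proof (induction k)
    case (Suc k)
    have "x (int (Suc k)) = x (int k) * g k"
      using rec[of "int (Suc k)"] unfolding g_def by (simp add: add.commute)
    then show ?case using Suc.IH by (simp add: algebra_simps)
  qed simp
  have "(\<lambda>k. prod g {..<Suc k}) \<longlonglongrightarrow> prodinf g"
    using convergent_prod_LIMSEQ[OF g] by (simp add: lessThan_Suc_atMost)
  then have "(\<lambda>k. prod g {..<k}) \<longlonglongrightarrow> prodinf g"
    by (rule LIMSEQ_imp_Suc)
  then have "(\<lambda>k. x (int k)) \<longlonglongrightarrow> x 0 * prodinf g"
    unfolding x_nat by (intro tendsto_mult tendsto_const)
  then have "(x \<longlongrightarrow> x 0 * prodinf g) at_top"
    by (rule filterlim_int_of_nat_at_topD)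
  moreover have "x 0 * prodinf g \<noteq> 0"
    using \<open>x 0 \<noteq> 0\<close> prodinf_nonzero[OF g] nonzero unfolding g_def by simp
  ultimately show ?thesis using that by blast
qed

lemma infinite_product_int:
  fixes a :: "int \<Rightarrow> complex"
  assumes a: "abs_summable_int a" and nonzero: "\<And>j. 1 + a j \<noteq> 0"
    and P: "\<And>n. P n = Lim at_bot (\<lambda>m. \<Prod>j\<in>{m..n}. 1 + a j)"
  shows "P n = P (n - 1) * (1 + a n)" and "(P \<longlongrightarrow> 1) at_bot" and "P n \<noteq> 0"
    and "(P \<longlongrightarrow> Lim at_top P) at_top" and "Lim at_top P \<noteq> 0"
proof -
  obtain x where rec: "\<And>n. x n = x (n - 1) * (1 + a n)" and bot: "(x \<longlongrightarrow> 1) at_bot"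
    using product_recursion_solution[OF a] by blast
  note x0 = product_recursion_nonzero[where x = x and a = a, OF rec nonzero bot]
  have "((\<lambda>m. \<Prod>j\<in>{m..n}. 1 + a j) \<longlongrightarrow> x n) at_bot" for n
  proof -
    have "((\<lambda>m. x n / x (m + - 1)) \<longlongrightarrow> x n / 1) at_bot"
      by (intro tendsto_divide tendsto_const filterlim_compose[OF bot filterlim_int_add_const(2)]) simp
    moreover have "\<forall>\<^sub>F m in at_bot. x n / x (m + - 1) = (\<Prod>j\<in>{m..n}. 1 + a j)"
      unfolding eventually_at_bot_linorder
      using partial_product_eq_quotient[where x = x and a = a, OF rec x0] by (auto intro!: exI[of _ n])
    ultimately show ?thesis by (simp add: tendsto_cong)
  qed
  then have P: "P = x"
    unfolding P by (intro ext tendsto_Lim) simp_all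
  obtain L where "L \<noteq> 0" and L: "(x \<longlongrightarrow> L) at_top"
    using product_recursion_tendsto_at_top[OF a nonzero rec x0] .
  moreover have "Lim at_top x = L"
    using L by (intro tendsto_Lim) simp_all
  ultimately show "(P \<longlongrightarrow> Lim at_top P) at_top" and "Lim at_top P \<noteq> 0"
    unfolding P by simp_all
  show "P n = P (n - 1) * (1 + a n)" and "(P \<longlongrightarrow> 1) at_bot" and "P n \<noteq> 0"
    unfolding P by (fact rec bot x0)+
qed

section \<open>The gauge transformations\<close>

lemma csmult_1 [simp]: "csmult 1 w = w"
  by (simp add: csmult_def)

lemma Qstep_csmult: "Qstep q r z n (csmult c w) = csmult c (Qstep q r z n w)"
  by (simp add: Qstep_def csmult_def algebra_simps)

lemma csmult_Gamma_eq_mat2: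
  "csmult c (Gamma q r z n w) = mat2 (c * ((1 - inverse (z ^ 2)) / En q r (n - 1))) 0
     (c * (r n / En q r (n - 1))) (c * (1 / Dn q r (n - 1))) w"
  by (simp add: csmult_def Gamma_def mat2_def algebra_simps)

lemma csmult_Lambda_eq_mat2:
  "csmult c (Lambda q r n w) = mat2 (c * (1 / En q r (n - 1))) (c * - (q n / Dn q r n))
     (c * (r n / En q r (n - 1))) (c * (1 / Dn q r (n - 1))) w"
  by (simp add: csmult_def Lambda_def mat2_def algebra_simps)

lemma tendsto_twist_Gamma:
  assumes z: "cmod z = 1"
    and E: "((\<lambda>n. En q r (n - 1)) \<longlongrightarrow> E) F" and D: "((\<lambda>n. Dn q r (n - 1)) \<longlongrightarrow> D) F"
    and "E \<noteq> 0" and "D \<noteq> 0" and r: "(r \<longlongrightarrow> 0) F"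
    and f: "((\<lambda>n. twist z n (f n)) \<longlongrightarrow> (x, y)) F"
  shows "((\<lambda>n. twist z n (csmult c (Gamma q r z n (f n))))
           \<longlongrightarrow> (c * ((1 - inverse (z ^ 2)) / E) * x, c * (1 / D) * y)) F"
  unfolding csmult_Gamma_eq_mat2
proof (rule tendsto_twist_mat2[OF z _ _ _ _ f])
  show "((\<lambda>n. c * ((1 - inverse (z ^ 2)) / En q r (n - 1))) \<longlongrightarrow> c * ((1 - inverse (z ^ 2)) / E)) F"
    and "((\<lambda>n. c * (1 / Dn q r (n - 1))) \<longlongrightarrow> c * (1 / D)) F"
    using assms by (auto intro!: tendsto_mult tendsto_divide)
  show "((\<lambda>n. c * (r n / En q r (n - 1))) \<longlongrightarrow> 0) F"
    using tendsto_mult[OF tendsto_const tendsto_divide[OF r E \<open>E \<noteq> 0\<close>], of c] by simp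
qed simp

lemma tendsto_twist_Lambda:
  assumes z: "cmod z = 1"
    and E: "((\<lambda>n. En q r (n - 1)) \<longlongrightarrow> E) F" and D: "((\<lambda>n. Dn q r (n - 1)) \<longlongrightarrow> D) F"
    and D': "(Dn q r \<longlongrightarrow> D) F" and "E \<noteq> 0" and "D \<noteq> 0"
    and q: "(q \<longlongrightarrow> 0) F" and r: "(r \<longlongrightarrow> 0) F"
    and f: "((\<lambda>n. twist z n (f n)) \<longlongrightarrow> (x, y)) F"
  shows "((\<lambda>n. twist z n (csmult c (Lambda q r n (f n)))) \<longlongrightarrow> (c * (1 / E) * x, c * (1 / D) * y)) F"
  unfolding csmult_Lambda_eq_mat2
proof (rule tendsto_twist_mat2[OF z _ _ _ _ f])
  show "((\<lambda>n. c * (1 / En q r (n - 1))) \<longlongrightarrow> c * (1 / E)) F"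
    and "((\<lambda>n. c * (1 / Dn q r (n - 1))) \<longlongrightarrow> c * (1 / D)) F"
    using assms by (auto intro!: tendsto_mult tendsto_divide)
  show "((\<lambda>n. c * - (q n / Dn q r n)) \<longlongrightarrow> 0) F"
    using tendsto_mult[OF tendsto_const tendsto_minus[OF tendsto_divide[OF q D' \<open>D \<noteq> 0\<close>]], of c]
    by simp
  show "((\<lambda>n. c * (r n / En q r (n - 1))) \<longlongrightarrow> 0) F"
    using tendsto_mult[OF tendsto_const tendsto_divide[OF r E \<open>E \<noteq> 0\<close>], of c] by simp
qed

locale summable_potentials =
  fixes q r :: "int \<Rightarrow> complex"
  assumes q: "abs_summable_int q" and r: "abs_summable_int r"
    and D_factor_nonzero: "\<And>j. 1 - q j * r j \<noteq> 0"
    and E_factor_nonzero: "\<And>j. 1 + q j * r (j + 1) \<noteq> 0"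
begin

lemma q_tendsto_0: "(q \<longlongrightarrow> 0) at_top" "(q \<longlongrightarrow> 0) at_bot"
  and r_tendsto_0: "(r \<longlongrightarrow> 0) at_top" "(r \<longlongrightarrow> 0) at_bot"
  by (fact abs_summable_int_tendsto_0[OF q] abs_summable_int_tendsto_0[OF r])+

lemma D_recursion: "Dn q r n = Dn q r (n - 1) * (1 - q n * r n)"
  and D_tendsto_1: "(Dn q r \<longlongrightarrow> 1) at_bot"
  and D_nonzero: "Dn q r n \<noteq> 0"
  and D_tendsto_Dinf: "(Dn q r \<longlongrightarrow> Dinf q r) at_top"
  and Dinf_nonzero: "Dinf q r \<noteq> 0"
proof -
  have summable: "abs_summable_int (\<lambda>j. - q j * r j)"
    using r_tendsto_0 by (intro abs_summable_int_mult_convergent(1) abs_summable_int_minus q)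
  have nonzero: "1 + - q j * r j \<noteq> 0" for j
    using D_factor_nonzero[of j] by simp
  have "Dn q r n = Lim at_bot (\<lambda>m. \<Prod>j\<in>{m..n}. 1 + - q j * r j)" for n
    by (simp add: Dn_def)
  note D = infinite_product_int[OF summable nonzero this]
  have Dinf: "Dinf q r = Lim at_top (Dn q r)"
    by (simp add: Dinf_def)
  show "Dn q r n = Dn q r (n - 1) * (1 - q n * r n)"
    using D(1)[of n] by simp
  show "(Dn q r \<longlongrightarrow> 1) at_bot" and "Dn q r n \<noteq> 0"
    and "(Dn q r \<longlongrightarrow> Dinf q r) at_top" and "Dinf q r \<noteq> 0"
    by (fact D(2,3) D(4,5)[folded Dinf])+
qed

lemma E_recursion: "En q r n = En q r (n - 1) * (1 + q n * r (n + 1))"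
  and E_tendsto_1: "(En q r \<longlongrightarrow> 1) at_bot"
  and E_nonzero: "En q r n \<noteq> 0"
  and E_tendsto_Einf: "(En q r \<longlongrightarrow> Einf q r) at_top"
  and Einf_nonzero: "Einf q r \<noteq> 0"
proof -
  have summable: "abs_summable_int (\<lambda>j. q j * r (j + 1))"
    using filterlim_compose[OF r_tendsto_0(1) filterlim_int_add_const(1)]
      filterlim_compose[OF r_tendsto_0(2) filterlim_int_add_const(2)]
    by (intro abs_summable_int_mult_convergent(1) q)
  have "En q r n = Lim at_bot (\<lambda>m. \<Prod>j\<in>{m..n}. 1 + q j * r (j + 1))" for n
    by (simp add: En_def)
  note E = infinite_product_int[OF summable E_factor_nonzero this]
  have Einf: "Einf q r = Lim at_top (En q r)"
    by (simp add: Einf_def)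
  show "En q r n = En q r (n - 1) * (1 + q n * r (n + 1))" and "(En q r \<longlongrightarrow> 1) at_bot"
    and "En q r n \<noteq> 0" and "(En q r \<longlongrightarrow> Einf q r) at_top" and "Einf q r \<noteq> 0"
    by (fact E(1,2,3) E(4,5)[folded Einf])+
qed

lemma D_shift_tendsto: "((\<lambda>n. Dn q r (n - 1)) \<longlongrightarrow> Dinf q r) at_top" "((\<lambda>n. Dn q r (n - 1)) \<longlongrightarrow> 1) at_bot"
  and D_Suc_tendsto: "((\<lambda>n. Dn q r (n + 1)) \<longlongrightarrow> Dinf q r) at_top" "((\<lambda>n. Dn q r (n + 1)) \<longlongrightarrow> 1) at_bot"
  and E_shift_tendsto: "((\<lambda>n. En q r (n - 1)) \<longlongrightarrow> Einf q r) at_top" "((\<lambda>n. En q r (n - 1)) \<longlongrightarrow> 1) at_bot"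
  using filterlim_compose[OF D_tendsto_Dinf filterlim_int_add_const(1), of "- 1"]
    filterlim_compose[OF D_tendsto_1 filterlim_int_add_const(2), of "- 1"]
    filterlim_compose[OF D_tendsto_Dinf filterlim_int_add_const(1), of 1]
    filterlim_compose[OF D_tendsto_1 filterlim_int_add_const(2), of 1]
    filterlim_compose[OF E_tendsto_Einf filterlim_int_add_const(1), of "- 1"]
    filterlim_compose[OF E_tendsto_1 filterlim_int_add_const(2), of "- 1"]
  by simp_all

lemma abs_summable_q_Suc: "abs_summable_int (\<lambda>n. q (n + 1))"
  and abs_summable_r_Suc: "abs_summable_int (\<lambda>n. r (n + 1))"
  by (fact abs_summable_int_shift[OF q] abs_summable_int_shift[OF r])+

lemmas q_Suc_tendsto_0 = abs_summable_int_tendsto_0[OF abs_summable_q_Suc]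
  and r_Suc_tendsto_0 = abs_summable_int_tendsto_0[OF abs_summable_r_Suc]

lemma abs_summable_useq: "abs_summable_int (useq q r)"
proof -
  have "useq q r = (\<lambda>n. q n * (En q r (n - 1) / Dn q r n))"
    by (simp add: fun_eq_iff useq_def)
  then show ?thesis
    using abs_summable_int_mult_convergent(1)[OF q
        tendsto_divide[OF E_shift_tendsto(1) D_tendsto_Dinf Dinf_nonzero]
        tendsto_divide[OF E_shift_tendsto(2) D_tendsto_1 one_neq_zero]] by simp
qed

lemma abs_summable_vseq: "abs_summable_int (vseq q r)"
proof -
  define X where "X n = - r n + r (n + 1) - q n * (r n * r (n + 1))" for n
  have "abs_summable_int (\<lambda>n. q n * (r n * r (n + 1)))"
    by (fact abs_summable_int_mult_convergent(1)[OF q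
        tendsto_mult[OF r_tendsto_0(1) r_Suc_tendsto_0(1)] tendsto_mult[OF r_tendsto_0(2) r_Suc_tendsto_0(2)]])
  then have "abs_summable_int X"
    unfolding X_def by (intro abs_summable_int_diff abs_summable_int_add abs_summable_int_minus r abs_summable_r_Suc)
  moreover have "vseq q r = (\<lambda>n. X n * (Dn q r (n - 1) / En q r n))"
    by (simp add: fun_eq_iff vseq_def X_def mult.assoc)
  ultimately show ?thesis
    using abs_summable_int_mult_convergent(1)[of X,
        OF _ tendsto_divide[OF D_shift_tendsto(1) E_tendsto_Einf Einf_nonzero]
        tendsto_divide[OF D_shift_tendsto(2) E_tendsto_1 one_neq_zero]] by simp
qed

lemma abs_summable_pseq: "abs_summable_int (pseq q r)"
proof -
  define Y where "Y n = q n - q (n + 1) - q n * (q (n + 1) * r (n + 1))" for n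
  have "abs_summable_int (\<lambda>n. q n * (q (n + 1) * r (n + 1)))"
    by (fact abs_summable_int_mult_convergent(1)[OF q tendsto_mult[OF q_Suc_tendsto_0(1) r_Suc_tendsto_0(1)]
        tendsto_mult[OF q_Suc_tendsto_0(2) r_Suc_tendsto_0(2)]])
  then have "abs_summable_int Y"
    unfolding Y_def by (intro abs_summable_int_diff q abs_summable_q_Suc)
  moreover have "pseq q r = (\<lambda>n. Y n * (En q r (n - 1) / Dn q r (n + 1)))"
    by (simp add: fun_eq_iff pseq_def Y_def mult.assoc)
  ultimately show ?thesis
    using abs_summable_int_mult_convergent(1)[of Y,
        OF _ tendsto_divide[OF E_shift_tendsto(1) D_Suc_tendsto(1) Dinf_nonzero]
        tendsto_divide[OF E_shift_tendsto(2) D_Suc_tendsto(2) one_neq_zero]] by simp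
qed

lemma abs_summable_sseq: "abs_summable_int (sseq q r)"
proof -
  have "sseq q r = (\<lambda>n. r (n + 1) * (Dn q r n / En q r n))"
    by (simp add: fun_eq_iff sseq_def)
  then show ?thesis
    using abs_summable_int_mult_convergent(1)[OF abs_summable_r_Suc
        tendsto_divide[OF D_tendsto_Dinf E_tendsto_Einf Einf_nonzero]
        tendsto_divide[OF D_tendsto_1 E_tendsto_1 one_neq_zero]] by simp
qed

lemma D_recursion_Suc: "Dn q r (n + 1) = Dn q r n * (1 - q (n + 1) * r (n + 1))"
  using D_recursion[of "n + 1"] by simp

lemma useq_vseq_ne_1: "useq q r n * vseq q r n \<noteq> 1"
proof -
  have inverses: "Dn q r (n - 1) * inverse (Dn q r (n - 1)) = 1"
    "En q r (n - 1) * inverse (En q r (n - 1)) = 1"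
    "(1 - q n * r n) * inverse (1 - q n * r n) = 1"
    "(1 + q n * r (n + 1)) * inverse (1 + q n * r (n + 1)) = 1"
    using D_nonzero E_nonzero D_factor_nonzero E_factor_nonzero by auto
  have "(1 - useq q r n * vseq q r n) * ((1 - q n * r n) * (1 + q n * r (n + 1))) = 1"
    unfolding useq_def vseq_def D_recursion[of n] E_recursion[of n] divide_inverse inverse_mult_distrib
    using inverses by algebra
  then show ?thesis by auto
qed

lemma pseq_sseq_ne_1: "pseq q r n * sseq q r n \<noteq> 1"
proof -
  have inverses: "Dn q r n * inverse (Dn q r n) = 1"
    "En q r (n - 1) * inverse (En q r (n - 1)) = 1"
    "(1 - q (n + 1) * r (n + 1)) * inverse (1 - q (n + 1) * r (n + 1)) = 1"
    "(1 + q n * r (n + 1)) * inverse (1 + q n * r (n + 1)) = 1"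
    using D_nonzero E_nonzero D_factor_nonzero E_factor_nonzero by auto
  have "(1 - pseq q r n * sseq q r n) * ((1 - q (n + 1) * r (n + 1)) * (1 + q n * r (n + 1))) = 1"
    unfolding pseq_def sseq_def D_recursion_Suc E_recursion[of n] divide_inverse inverse_mult_distrib
    using inverses by algebra
  then show ?thesis by auto
qed

lemma Gamma_intertwines:
  assumes "z \<noteq> 0"
  shows "Gamma q r z n (Ustep (useq q r) (vseq q r) z n w) = Qstep q r z n (Gamma q r z (n + 1) w)"
proof -
  have inverses: "z * inverse z = 1" "Dn q r (n - 1) * inverse (Dn q r (n - 1)) = 1"
    "En q r (n - 1) * inverse (En q r (n - 1)) = 1"
    "(1 - q n * r n) * inverse (1 - q n * r n) = 1"
    "(1 + q n * r (n + 1)) * inverse (1 + q n * r (n + 1)) = 1"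
    using assms D_nonzero E_nonzero D_factor_nonzero E_factor_nonzero by auto
  show ?thesis
    unfolding Gamma_def Ustep_def Qstep_def useq_def vseq_def prod_eq_iff fst_conv snd_conv
    unfolding D_recursion[of n] E_recursion[of n] divide_inverse inverse_mult_distrib
      power_inverse[symmetric] add_diff_cancel_right'
    using inverses by algebra
qed

lemma Lambda_intertwines:
  assumes "z \<noteq> 0"
  shows "Lambda q r n (Ustep (pseq q r) (sseq q r) z n w) = Qstep q r z n (Lambda q r (n + 1) w)"
proof -
  have inverses: "z * inverse z = 1" "Dn q r (n - 1) * inverse (Dn q r (n - 1)) = 1"
    "En q r (n - 1) * inverse (En q r (n - 1)) = 1"
    "(1 - q n * r n) * inverse (1 - q n * r n) = 1"
    "(1 + q n * r (n + 1)) * inverse (1 + q n * r (n + 1)) = 1"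
    "(1 - q (n + 1) * r (n + 1)) * inverse (1 - q (n + 1) * r (n + 1)) = 1"
    using assms D_nonzero E_nonzero D_factor_nonzero E_factor_nonzero by auto
  show ?thesis
    unfolding Lambda_def Ustep_def Qstep_def pseq_def sseq_def prod_eq_iff fst_conv snd_conv
      add_diff_cancel_right'
    unfolding D_recursion_Suc
    unfolding D_recursion[of n] E_recursion[of n] divide_inverse inverse_mult_distrib
    using inverses by algebra
qed

lemma Gamma_solution_transfer:
  assumes z: "cmod z = 1"
    and Q: "\<exists>!f. solves (Qstep q r z) f \<and> P f" and U: "\<exists>!f. solves (Ustep (useq q r) (vseq q r) z) f \<and> P f"
    and preserves: "\<And>f. P f \<Longrightarrow> P (\<lambda>n. csmult c (Gamma q r z n (f n)))"
  shows "(THE f. solves (Qstep q r z) f \<and> P f)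
           = (\<lambda>n. csmult c (Gamma q r z n ((THE f. solves (Ustep (useq q r) (vseq q r) z) f \<and> P f) n)))"
proof (rule the_solution_transfer[OF Q U _ preserves])
  have "z \<noteq> 0" using z by auto
  then show "csmult c (Gamma q r z n (Ustep (useq q r) (vseq q r) z n w))
          = Qstep q r z n (csmult c (Gamma q r z (n + 1) w))" for n w
    by (simp add: Gamma_intertwines Qstep_csmult)
qed

lemma Lambda_solution_transfer:
  assumes z: "cmod z = 1"
    and Q: "\<exists>!f. solves (Qstep q r z) f \<and> P f" and U: "\<exists>!f. solves (Ustep (pseq q r) (sseq q r) z) f \<and> P f"
    and preserves: "\<And>f. P f \<Longrightarrow> P (\<lambda>n. csmult c (Lambda q r n (f n)))"
  shows "(THE f. solves (Qstep q r z) f \<and> P f)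
           = (\<lambda>n. csmult c (Lambda q r n ((THE f. solves (Ustep (pseq q r) (sseq q r) z) f \<and> P f) n)))"
proof (rule the_solution_transfer[OF Q U _ preserves])
  have "z \<noteq> 0" using z by auto
  then show "csmult c (Lambda q r n (Ustep (pseq q r) (sseq q r) z n w))
          = Qstep q r z n (csmult c (Lambda q r (n + 1) w))" for n w
    by (simp add: Lambda_intertwines Qstep_csmult)
qed

lemma Gamma_preserves_jost_conditions:
  assumes z: "cmod z = 1"
  shows "psi_cond z f \<Longrightarrow> psi_cond z (\<lambda>n. csmult (Dinf q r) (Gamma q r z n (f n)))"
    and "z ^ 2 \<noteq> 1 \<Longrightarrow> phi_cond z f
           \<Longrightarrow> phi_cond z (\<lambda>n. csmult (1 / (1 - inverse (z ^ 2))) (Gamma q r z n (f n)))"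
    and "z ^ 2 \<noteq> 1 \<Longrightarrow> psibar_cond z f
           \<Longrightarrow> psibar_cond z (\<lambda>n. csmult (Einf q r / (1 - inverse (z ^ 2))) (Gamma q r z n (f n)))"
    and "phibar_cond z f \<Longrightarrow> phibar_cond z (\<lambda>n. csmult 1 (Gamma q r z n (f n)))"
proof -
  note at_top = tendsto_twist_Gamma[OF z E_shift_tendsto(1) D_shift_tendsto(1) Einf_nonzero Dinf_nonzero
      r_tendsto_0(1), THEN tendsto_eq_rhs]
    and at_bot = tendsto_twist_Gamma[OF z E_shift_tendsto(2) D_shift_tendsto(2) one_neq_zero one_neq_zero
      r_tendsto_0(2), THEN tendsto_eq_rhs]
  show "psi_cond z (\<lambda>n. csmult (Dinf q r) (Gamma q r z n (f n)))" if "psi_cond z f"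
    using that unfolding psi_cond_iff_twist[OF z] by (rule at_top) (simp add: Dinf_nonzero)
  show "phi_cond z (\<lambda>n. csmult (1 / (1 - inverse (z ^ 2))) (Gamma q r z n (f n)))"
    if z2: "z ^ 2 \<noteq> 1" and f: "phi_cond z f"
    using f unfolding phi_cond_iff_twist[OF z]
    by (rule at_bot) (use z2 in \<open>simp add: inverse_eq_1_iff\<close>)
  show "psibar_cond z (\<lambda>n. csmult (Einf q r / (1 - inverse (z ^ 2))) (Gamma q r z n (f n)))"
    if z2: "z ^ 2 \<noteq> 1" and f: "psibar_cond z f"
    using f unfolding psibar_cond_iff_twist[OF z]
    by (rule at_top) (use z2 Einf_nonzero in \<open>simp add: inverse_eq_1_iff\<close>)
  show "phibar_cond z (\<lambda>n. csmult 1 (Gamma q r z n (f n)))" if "phibar_cond z f"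
    using that unfolding phibar_cond_iff_twist[OF z] by (rule at_bot) simp
qed

lemma Lambda_preserves_jost_conditions:
  assumes z: "cmod z = 1"
  shows "psi_cond z f \<Longrightarrow> psi_cond z (\<lambda>n. csmult (Dinf q r) (Lambda q r n (f n)))"
    and "phi_cond z f \<Longrightarrow> phi_cond z (\<lambda>n. csmult 1 (Lambda q r n (f n)))"
    and "psibar_cond z f \<Longrightarrow> psibar_cond z (\<lambda>n. csmult (Einf q r) (Lambda q r n (f n)))"
    and "phibar_cond z f \<Longrightarrow> phibar_cond z (\<lambda>n. csmult 1 (Lambda q r n (f n)))"
proof -
  note at_top = tendsto_twist_Lambda[OF z E_shift_tendsto(1) D_shift_tendsto(1) D_tendsto_Dinf
      Einf_nonzero Dinf_nonzero q_tendsto_0(1) r_tendsto_0(1), THEN tendsto_eq_rhs]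
    and at_bot = tendsto_twist_Lambda[OF z E_shift_tendsto(2) D_shift_tendsto(2) D_tendsto_1
      one_neq_zero one_neq_zero q_tendsto_0(2) r_tendsto_0(2), THEN tendsto_eq_rhs]
  show "psi_cond z (\<lambda>n. csmult (Dinf q r) (Lambda q r n (f n)))" if "psi_cond z f"
    using that unfolding psi_cond_iff_twist[OF z] by (rule at_top) (simp add: Dinf_nonzero)
  show "phi_cond z (\<lambda>n. csmult 1 (Lambda q r n (f n)))" if "phi_cond z f"
    using that unfolding phi_cond_iff_twist[OF z] by (rule at_bot) simp
  show "psibar_cond z (\<lambda>n. csmult (Einf q r) (Lambda q r n (f n)))" if "psibar_cond z f"
    using that unfolding psibar_cond_iff_twist[OF z] by (rule at_top) (simp add: Einf_nonzero)
  show "phibar_cond z (\<lambda>n. csmult 1 (Lambda q r n (f n)))" if "phibar_cond z f"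
    using that unfolding phibar_cond_iff_twist[OF z] by (rule at_bot) simp
qed

lemma jost_Gamma:
  assumes z: "cmod z = 1"
  defines "U \<equiv> Ustep (useq q r) (vseq q r) z"
  shows "jost_psi (Qstep q r z) z = (\<lambda>n. csmult (Dinf q r) (Gamma q r z n (jost_psi U z n)))"
    and "z ^ 2 \<noteq> 1 \<Longrightarrow> jost_phi (Qstep q r z) z
           = (\<lambda>n. csmult (1 / (1 - inverse (z ^ 2))) (Gamma q r z n (jost_phi U z n)))"
    and "z ^ 2 \<noteq> 1 \<Longrightarrow> jost_psibar (Qstep q r z) z
           = (\<lambda>n. csmult (Einf q r / (1 - inverse (z ^ 2))) (Gamma q r z n (jost_psibar U z n)))"
    and "jost_phibar (Qstep q r z) z = (\<lambda>n. Gamma q r z n (jost_phibar U z n))"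
proof -
  note Q = ex1_jost_Qstep[OF z q r]
    and U = ex1_jost_Ustep[OF z abs_summable_useq abs_summable_vseq useq_vseq_ne_1, folded U_def]
    and transfer = Gamma_solution_transfer[OF z, folded U_def]
    and preserves = Gamma_preserves_jost_conditions[OF z]
  show "jost_psi (Qstep q r z) z = (\<lambda>n. csmult (Dinf q r) (Gamma q r z n (jost_psi U z n)))"
    unfolding jost_psi_def by (rule transfer[OF Q(1) U(1) preserves(1)])
  show "jost_phi (Qstep q r z) z = (\<lambda>n. csmult (1 / (1 - inverse (z ^ 2))) (Gamma q r z n (jost_phi U z n)))"
    if "z ^ 2 \<noteq> 1"
    unfolding jost_phi_def by (rule transfer[OF Q(3) U(3) preserves(2)[OF that]])
  show "jost_psibar (Qstep q r z) z
      = (\<lambda>n. csmult (Einf q r / (1 - inverse (z ^ 2))) (Gamma q r z n (jost_psibar U z n)))"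
    if "z ^ 2 \<noteq> 1"
    unfolding jost_psibar_def by (rule transfer[OF Q(2) U(2) preserves(3)[OF that]])
  have "jost_phibar (Qstep q r z) z = (\<lambda>n. csmult 1 (Gamma q r z n (jost_phibar U z n)))"
    unfolding jost_phibar_def by (rule transfer[OF Q(4) U(4) preserves(4)])
  then show "jost_phibar (Qstep q r z) z = (\<lambda>n. Gamma q r z n (jost_phibar U z n))"
    by simp
qed

lemma jost_Lambda:
  assumes z: "cmod z = 1"
  defines "U \<equiv> Ustep (pseq q r) (sseq q r) z"
  shows "jost_psi (Qstep q r z) z = (\<lambda>n. csmult (Dinf q r) (Lambda q r n (jost_psi U z n)))"
    and "jost_phi (Qstep q r z) z = (\<lambda>n. Lambda q r n (jost_phi U z n))"
    and "jost_psibar (Qstep q r z) z = (\<lambda>n. csmult (Einf q r) (Lambda q r n (jost_psibar U z n)))"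
    and "jost_phibar (Qstep q r z) z = (\<lambda>n. Lambda q r n (jost_phibar U z n))"
proof -
  note Q = ex1_jost_Qstep[OF z q r]
    and U = ex1_jost_Ustep[OF z abs_summable_pseq abs_summable_sseq pseq_sseq_ne_1, folded U_def]
    and transfer = Lambda_solution_transfer[OF z, folded U_def]
    and preserves = Lambda_preserves_jost_conditions[OF z]
  show "jost_psi (Qstep q r z) z = (\<lambda>n. csmult (Dinf q r) (Lambda q r n (jost_psi U z n)))"
    unfolding jost_psi_def by (rule transfer[OF Q(1) U(1) preserves(1)])
  have "jost_phi (Qstep q r z) z = (\<lambda>n. csmult 1 (Lambda q r n (jost_phi U z n)))"
    unfolding jost_phi_def by (rule transfer[OF Q(3) U(3) preserves(2)])
  then show "jost_phi (Qstep q r z) z = (\<lambda>n. Lambda q r n (jost_phi U z n))"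
    by simp
  show "jost_psibar (Qstep q r z) z = (\<lambda>n. csmult (Einf q r) (Lambda q r n (jost_psibar U z n)))"
    unfolding jost_psibar_def by (rule transfer[OF Q(2) U(2) preserves(3)])
  have "jost_phibar (Qstep q r z) z = (\<lambda>n. csmult 1 (Lambda q r n (jost_phibar U z n)))"
    unfolding jost_phibar_def by (rule transfer[OF Q(4) U(4) preserves(4)])
  then show "jost_phibar (Qstep q r z) z = (\<lambda>n. Lambda q r n (jost_phibar U z n))"
    by simp
qed

end

theorem theorem3p3:
  fixes q r :: "int \<Rightarrow> complex" and z :: complex and n :: int
  assumes "rapid_decay q" and "rapid_decay r"
    and "\<And>j. 1 - q j * r j \<noteq> 0"
    and "\<And>j. 1 + q j * r (j + 1) \<noteq> 0"
    and "cmod z = 1"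
  defines "u \<equiv> useq q r" and "v \<equiv> vseq q r" and "p \<equiv> pseq q r" and "s \<equiv> sseq q r"
  shows
    "jost_psi (Qstep q r z) z n = csmult (Dinf q r) (Gamma q r z n (jost_psi (Ustep u v z) z n)) \<and>
     jost_psi (Qstep q r z) z n = csmult (Dinf q r) (Lambda q r n (jost_psi (Ustep p s z) z n)) \<and>
     (z ^ 2 \<noteq> 1 \<longrightarrow>
        jost_phi (Qstep q r z) z n =
          csmult (1 / (1 - inverse (z ^ 2))) (Gamma q r z n (jost_phi (Ustep u v z) z n))) \<and>
     jost_phi (Qstep q r z) z n = Lambda q r n (jost_phi (Ustep p s z) z n) \<and>
     (z ^ 2 \<noteq> 1 \<longrightarrow>
        jost_psibar (Qstep q r z) z n =
          csmult (Einf q r / (1 - inverse (z ^ 2))) (Gamma q r z n (jost_psibar (Ustep u v z) z n))) \<and>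
     jost_psibar (Qstep q r z) z n = csmult (Einf q r) (Lambda q r n (jost_psibar (Ustep p s z) z n)) \<and>
     jost_phibar (Qstep q r z) z n = Gamma q r z n (jost_phibar (Ustep u v z) z n) \<and>
     jost_phibar (Qstep q r z) z n = Lambda q r n (jost_phibar (Ustep p s z) z n)"
proof -
  interpret summable_potentials q r
    using assms(1-4) by unfold_locales (simp_all add: rapid_decay_imp_abs_summable_int)
  show ?thesis
    unfolding u_def v_def p_def s_def
    using jost_Gamma[OF \<open>cmod z = 1\<close>, THEN fun_cong, of n]
      jost_Lambda[OF \<open>cmod z = 1\<close>, THEN fun_cong, of n]
    by blast
qed

end
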